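(* Let $R$ be a local ring (i.e. $R/J(R)$ is a division ring), ${}_RM$ a finitely generated semisimple left $R$-module with $d=\dim_R(M)$, $\varphi:M\to M$ a nilpotent $R$-endomorphism with index of nilpotency $n$ ($\varphi^n=0\ne\varphi^{n-1}$), and $\sigma\in\mathrm{Hom}_R(M,M)$ arbitrary. Then the following are equivalent: (1) $C_\varphi\subseteq C_\sigma$; (2) there exist an $R$-generating set $\{y_j\in M\mid1\le j\le d\}$ of ${}_RM$ and elements $a_1,\dots,a_n\in R$ such that \[a_1\psi(y_j)+a_2\varphi(\psi(y_j))+\cdots+a_n\varphi^{n-1}(\psi(y_j))=\sigma(\psi(y_j))\] for all $1\le j\le d$ and all $\psi\in C_\varphi$.
   Context: For $\alpha\in\mathrm{Hom}_R(M,M)$, $C_\alpha=\{\psi\in\mathrm{Hom}_R(M,M)\mid\psi\circ\alpha=\alpha\circ\psi\}$. $J(R)$ is the Jacobson radical and $\dim_R$ is composition length. *)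

theory Defs
  imports "HOL-Algebra.Algebra"
begin

text \<open>HOL-Algebra's locale module requires a commutative ring, so we define
left modules over an arbitrary ring ourselves, reusing the module record.\<close>

definition left_module :: "('a, 'c) ring_scheme \<Rightarrow> ('a, 'b, 'd) module_scheme \<Rightarrow> bool" where
  "left_module R M \<longleftrightarrow> ring R \<and> abelian_group M \<and>
     (\<forall>a\<in>carrier R. \<forall>x\<in>carrier M. a \<odot>\<^bsub>M\<^esub> x \<in> carrier M) \<and>
     (\<forall>a\<in>carrier R. \<forall>b\<in>carrier R. \<forall>x\<in>carrier M.
        (a \<oplus>\<^bsub>R\<^esub> b) \<odot>\<^bsub>M\<^esub> x = a \<odot>\<^bsub>M\<^esub> x \<oplus>\<^bsub>M\<^esub> b \<odot>\<^bsub>M\<^esub> x) \<and>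
     (\<forall>a\<in>carrier R. \<forall>x\<in>carrier M. \<forall>y\<in>carrier M.
        a \<odot>\<^bsub>M\<^esub> (x \<oplus>\<^bsub>M\<^esub> y) = a \<odot>\<^bsub>M\<^esub> x \<oplus>\<^bsub>M\<^esub> a \<odot>\<^bsub>M\<^esub> y) \<and>
     (\<forall>a\<in>carrier R. \<forall>b\<in>carrier R. \<forall>x\<in>carrier M.
        (a \<otimes>\<^bsub>R\<^esub> b) \<odot>\<^bsub>M\<^esub> x = a \<odot>\<^bsub>M\<^esub> (b \<odot>\<^bsub>M\<^esub> x)) \<and>
     (\<forall>x\<in>carrier M. \<one>\<^bsub>R\<^esub> \<odot>\<^bsub>M\<^esub> x = x)"

definition lsubmodule :: "('a, 'c) ring_scheme \<Rightarrow> ('a, 'b, 'd) module_scheme \<Rightarrow> 'b set \<Rightarrow> bool" where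
  "lsubmodule R M N \<longleftrightarrow> N \<subseteq> carrier M \<and> \<zero>\<^bsub>M\<^esub> \<in> N \<and>
     (\<forall>x\<in>N. \<forall>y\<in>N. x \<oplus>\<^bsub>M\<^esub> y \<in> N) \<and>
     (\<forall>x\<in>N. \<ominus>\<^bsub>M\<^esub> x \<in> N) \<and>
     (\<forall>a\<in>carrier R. \<forall>x\<in>N. a \<odot>\<^bsub>M\<^esub> x \<in> N)"

definition lspan :: "('a, 'c) ring_scheme \<Rightarrow> ('a, 'b, 'd) module_scheme \<Rightarrow> 'b set \<Rightarrow> 'b set" where
  "lspan R M S = \<Inter>{N. lsubmodule R M N \<and> S \<subseteq> N}"

definition generates :: "('a, 'c) ring_scheme \<Rightarrow> ('a, 'b, 'd) module_scheme \<Rightarrow> 'b set \<Rightarrow> bool" where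
  "generates R M S \<longleftrightarrow> S \<subseteq> carrier M \<and> lspan R M S = carrier M"

definition finitely_generated :: "('a, 'c) ring_scheme \<Rightarrow> ('a, 'b, 'd) module_scheme \<Rightarrow> bool" where
  "finitely_generated R M \<longleftrightarrow> (\<exists>S. finite S \<and> generates R M S)"

definition semisimple :: "('a, 'c) ring_scheme \<Rightarrow> ('a, 'b, 'd) module_scheme \<Rightarrow> bool" where
  "semisimple R M \<longleftrightarrow> (\<forall>N. lsubmodule R M N \<longrightarrow>
     (\<exists>N'. lsubmodule R M N' \<and> N \<inter> N' = {\<zero>\<^bsub>M\<^esub>} \<and>
           (\<forall>x\<in>carrier M. \<exists>u\<in>N. \<exists>v\<in>N'. x = u \<oplus>\<^bsub>M\<^esub> v)))"

definition composition_series ::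
  "('a, 'c) ring_scheme \<Rightarrow> ('a, 'b, 'd) module_scheme \<Rightarrow> (nat \<Rightarrow> 'b set) \<Rightarrow> nat \<Rightarrow> bool" where
  "composition_series R M N k \<longleftrightarrow>
     (\<forall>i\<le>k. lsubmodule R M (N i)) \<and> N 0 = {\<zero>\<^bsub>M\<^esub>} \<and> N k = carrier M \<and>
     (\<forall>i<k. N i \<subset> N (Suc i) \<and>
        \<not> (\<exists>L. lsubmodule R M L \<and> N i \<subset> L \<and> L \<subset> N (Suc i)))"

text \<open>Composition length (well defined by Jordan-Hoelder).\<close>
definition comp_length :: "('a, 'c) ring_scheme \<Rightarrow> ('a, 'b, 'd) module_scheme \<Rightarrow> nat" where
  "comp_length R M = (THE k. \<exists>N. composition_series R M N k)"

definition End :: "('a, 'c) ring_scheme \<Rightarrow> ('a, 'b, 'd) module_scheme \<Rightarrow> ('b \<Rightarrow> 'b) set" where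
  "End R M = {f. f \<in> carrier M \<rightarrow> carrier M \<and>
      (\<forall>x\<in>carrier M. \<forall>y\<in>carrier M. f (x \<oplus>\<^bsub>M\<^esub> y) = f x \<oplus>\<^bsub>M\<^esub> f y) \<and>
      (\<forall>a\<in>carrier R. \<forall>x\<in>carrier M. f (a \<odot>\<^bsub>M\<^esub> x) = a \<odot>\<^bsub>M\<^esub> f x)}"

text \<open>Maps are compared on the carrier only.\<close>
definition centralizer :: "('a, 'c) ring_scheme \<Rightarrow> ('a, 'b, 'd) module_scheme \<Rightarrow> ('b \<Rightarrow> 'b) \<Rightarrow> ('b \<Rightarrow> 'b) set" where
  "centralizer R M \<alpha> = {\<psi> \<in> End R M. \<forall>x\<in>carrier M. \<psi> (\<alpha> x) = \<alpha> (\<psi> x)}"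

definition nilpotent_index :: "('a, 'b, 'd) module_scheme \<Rightarrow> ('b \<Rightarrow> 'b) \<Rightarrow> nat \<Rightarrow> bool" where
  "nilpotent_index M \<phi> n \<longleftrightarrow> (\<forall>x\<in>carrier M. (\<phi> ^^ n) x = \<zero>\<^bsub>M\<^esub>) \<and>
      (\<exists>x\<in>carrier M. (\<phi> ^^ (n - 1)) x \<noteq> \<zero>\<^bsub>M\<^esub>)"

definition left_ideal :: "('a, 'c) ring_scheme \<Rightarrow> 'a set \<Rightarrow> bool" where
  "left_ideal R I \<longleftrightarrow> additive_subgroup I R \<and>
     (\<forall>r\<in>carrier R. \<forall>x\<in>I. r \<otimes>\<^bsub>R\<^esub> x \<in> I)"

definition maximal_left_ideal :: "('a, 'c) ring_scheme \<Rightarrow> 'a set \<Rightarrow> bool" where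
  "maximal_left_ideal R I \<longleftrightarrow> left_ideal R I \<and> I \<noteq> carrier R \<and>
     (\<forall>K. left_ideal R K \<and> I \<subseteq> K \<and> K \<noteq> carrier R \<longrightarrow> K = I)"

definition jacobson :: "('a, 'c) ring_scheme \<Rightarrow> 'a set" where
  "jacobson R = carrier R \<inter> \<Inter>{I. maximal_left_ideal R I}"

definition division_ring :: "('a, 'c) ring_scheme \<Rightarrow> bool" where
  "division_ring D \<longleftrightarrow> ring D \<and> \<one>\<^bsub>D\<^esub> \<noteq> \<zero>\<^bsub>D\<^esub> \<and>
     (\<forall>x\<in>carrier D - {\<zero>\<^bsub>D\<^esub>}. x \<in> Units D)"

definition local_ring :: "('a, 'c) ring_scheme \<Rightarrow> bool" where
  "local_ring R \<longleftrightarrow> ring R \<and> division_ring (R Quot jacobson R)"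

end

theory Submission
  imports Defs
begin

text \<open>Because \<open>R\<close> is local and \<open>M\<close> semisimple, the radical \<open>J(R)\<close> annihilates \<open>M\<close>, so every
  scalar outside \<open>J(R)\<close> acts invertibly on \<open>M\<close>. Fix \<open>w\<close> with \<open>\<phi>\<^bsup>n-1\<^esup> w \<noteq> 0\<close>. A scalar multiple of
  \<open>\<phi>\<^bsup>n-1\<^esup> w\<close> lies in the span of the \<open>\<phi>\<^sup>k w\<close>, \<open>k < n - 1\<close>, only if the scalar is in \<open>J(R)\<close>; using a
  complement of that span one obtains, for every \<open>x\<close>, an endomorphism \<open>\<theta>\<close> that kills those \<open>\<phi>\<^sup>k w\<close> and
  sends \<open>\<phi>\<^bsup>n-1\<^esup> w\<close> to \<open>x\<close>. The sandwich \<open>\<Sum>\<^sub>i \<phi>\<^sup>i \<theta> \<phi>\<^bsup>n-1-i\<^esup>\<close> then commutes with \<open>\<phi>\<close> and maps \<open>w\<close> to \<open>x\<close>.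

  If \<open>C\<^sub>\<phi> \<subseteq> C\<^sub>\<sigma>\<close>, then \<open>\<sigma>\<close> commutes with all these sandwiches. Taking \<open>x = w\<close> and \<open>\<theta>\<close> with values in
  \<open>Rw\<close> shows \<open>\<sigma> w = \<Sum>\<^sub>i b\<^sub>i \<phi>\<^sup>i w\<close>, and transporting this identity along the sandwich for arbitrary \<open>x\<close>
  gives \<open>\<sigma> = \<Sum>\<^sub>i b\<^sub>i \<phi>\<^sup>i\<close> on all of \<open>M\<close>. This is (2) for any generating family; one with \<open>d\<close> members
  exists because every composition series of \<open>M\<close> has length at most the size of any generating set.
  Conversely, (2) for \<open>\<psi> = id\<close> and for arbitrary \<open>\<psi> \<in> C\<^sub>\<phi>\<close> shows that \<open>\<psi>\<sigma>\<close> and \<open>\<sigma>\<psi>\<close> agree on generators.\<close>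

section \<open>Left modules\<close>

locale left_mod =
  fixes R :: "('a, 'c) ring_scheme" and M :: "('a, 'b, 'd) module_scheme"
  assumes left_module: "left_module R M"
begin

sublocale R: ring R
  using left_module unfolding left_module_def by blast

sublocale M: abelian_group M
  using left_module unfolding left_module_def by blast

lemma smult_closed [simp, intro]:
  "a \<in> carrier R \<Longrightarrow> x \<in> carrier M \<Longrightarrow> a \<odot>\<^bsub>M\<^esub> x \<in> carrier M"
  using left_module unfolding left_module_def by blast

lemma smult_l_distr:
  "a \<in> carrier R \<Longrightarrow> b \<in> carrier R \<Longrightarrow> x \<in> carrier M \<Longrightarrow>
   (a \<oplus>\<^bsub>R\<^esub> b) \<odot>\<^bsub>M\<^esub> x = a \<odot>\<^bsub>M\<^esub> x \<oplus>\<^bsub>M\<^esub> b \<odot>\<^bsub>M\<^esub> x"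
  using left_module unfolding left_module_def by blast

lemma smult_r_distr:
  "a \<in> carrier R \<Longrightarrow> x \<in> carrier M \<Longrightarrow> y \<in> carrier M \<Longrightarrow>
   a \<odot>\<^bsub>M\<^esub> (x \<oplus>\<^bsub>M\<^esub> y) = a \<odot>\<^bsub>M\<^esub> x \<oplus>\<^bsub>M\<^esub> a \<odot>\<^bsub>M\<^esub> y"
  using left_module unfolding left_module_def by blast

lemma smult_assoc1:
  "a \<in> carrier R \<Longrightarrow> b \<in> carrier R \<Longrightarrow> x \<in> carrier M \<Longrightarrow>
   (a \<otimes>\<^bsub>R\<^esub> b) \<odot>\<^bsub>M\<^esub> x = a \<odot>\<^bsub>M\<^esub> (b \<odot>\<^bsub>M\<^esub> x)"
  using left_module unfolding left_module_def by blast

lemma smult_one [simp]: "x \<in> carrier M \<Longrightarrow> \<one>\<^bsub>R\<^esub> \<odot>\<^bsub>M\<^esub> x = x"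
  using left_module unfolding left_module_def by blast

lemma smult_r_null [simp]: "a \<in> carrier R \<Longrightarrow> a \<odot>\<^bsub>M\<^esub> \<zero>\<^bsub>M\<^esub> = \<zero>\<^bsub>M\<^esub>"
  using smult_r_distr[of a "\<zero>\<^bsub>M\<^esub>" "\<zero>\<^bsub>M\<^esub>"] by (simp add: M.add.l_cancel_one')

lemma smult_l_null [simp]: "x \<in> carrier M \<Longrightarrow> \<zero>\<^bsub>R\<^esub> \<odot>\<^bsub>M\<^esub> x = \<zero>\<^bsub>M\<^esub>"
  using smult_l_distr[of "\<zero>\<^bsub>R\<^esub>" "\<zero>\<^bsub>R\<^esub>" x] by (simp add: M.add.l_cancel_one')

lemma smult_l_minus:
  assumes "a \<in> carrier R" "x \<in> carrier M"
  shows "(\<ominus>\<^bsub>R\<^esub> a) \<odot>\<^bsub>M\<^esub> x = \<ominus>\<^bsub>M\<^esub> (a \<odot>\<^bsub>M\<^esub> x)"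
proof -
  have "a \<odot>\<^bsub>M\<^esub> x \<oplus>\<^bsub>M\<^esub> (\<ominus>\<^bsub>R\<^esub> a) \<odot>\<^bsub>M\<^esub> x = \<zero>\<^bsub>M\<^esub>"
    using smult_l_distr[of a "\<ominus>\<^bsub>R\<^esub> a" x] assms by (simp add: R.r_neg)
  then show ?thesis
    using assms by (metis M.minus_equality M.a_comm R.a_inv_closed smult_closed)
qed

lemma smult_minus_distr:
  "a \<in> carrier R \<Longrightarrow> b \<in> carrier R \<Longrightarrow> x \<in> carrier M \<Longrightarrow>
   (a \<ominus>\<^bsub>R\<^esub> b) \<odot>\<^bsub>M\<^esub> x = a \<odot>\<^bsub>M\<^esub> x \<ominus>\<^bsub>M\<^esub> b \<odot>\<^bsub>M\<^esub> x"
  by (simp add: R.minus_eq M.minus_eq smult_l_distr smult_l_minus)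

lemma add_eq_imp_minus_eq:
  assumes M: "a \<in> carrier M" "a' \<in> carrier M" "q \<in> carrier M" "q' \<in> carrier M"
    and eq: "a \<oplus>\<^bsub>M\<^esub> q = a' \<oplus>\<^bsub>M\<^esub> q'"
  shows "a \<ominus>\<^bsub>M\<^esub> a' = q' \<ominus>\<^bsub>M\<^esub> q"
proof -
  have "a \<ominus>\<^bsub>M\<^esub> a' = (a \<oplus>\<^bsub>M\<^esub> q) \<oplus>\<^bsub>M\<^esub> (\<ominus>\<^bsub>M\<^esub> q \<oplus>\<^bsub>M\<^esub> \<ominus>\<^bsub>M\<^esub> a')"
    using M by (simp add: M.minus_eq M.a_assoc M.r_neg2)
  also have "\<dots> = a' \<oplus>\<^bsub>M\<^esub> (\<ominus>\<^bsub>M\<^esub> a' \<oplus>\<^bsub>M\<^esub> (q' \<oplus>\<^bsub>M\<^esub> \<ominus>\<^bsub>M\<^esub> q))"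
    using M by (simp add: eq M.a_ac)
  also have "\<dots> = q' \<ominus>\<^bsub>M\<^esub> q"
    using M by (simp only: M.r_neg2 M.a_inv_closed M.add.m_closed M.minus_eq)
  finally show ?thesis .
qed

lemma finsum_smult_ldistr:
  "finite A \<Longrightarrow> a \<in> carrier R \<Longrightarrow> f \<in> A \<rightarrow> carrier M \<Longrightarrow>
   a \<odot>\<^bsub>M\<^esub> (\<Oplus>\<^bsub>M\<^esub>i\<in>A. f i) = (\<Oplus>\<^bsub>M\<^esub>i\<in>A. a \<odot>\<^bsub>M\<^esub> f i)"
proof (induction A rule: finite_induct)
  case (insert x F)
  then show ?case
    by (simp add: M.finsum_insert smult_r_distr M.finsum_closed Pi_iff)
qed simp

lemma finsum_shift_index:
  fixes n :: nat
  assumes "0 < n" and f: "f \<in> {..n - 1} \<rightarrow> carrier M"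
  shows "(\<Oplus>\<^bsub>M\<^esub>i\<in>{1..n}. f (i - 1)) = (\<Oplus>\<^bsub>M\<^esub>i\<in>{..n - 1}. f i)"
proof -
  have "{1..n} = Suc ` {..n - 1}"
    using assms(1) by (simp add: atMost_atLeast0 image_Suc_atLeastAtMost)
  moreover have "(\<Oplus>\<^bsub>M\<^esub>i\<in>Suc ` {..n - 1}. f (i - 1)) = (\<Oplus>\<^bsub>M\<^esub>i\<in>{..n - 1}. f (Suc i - 1))"
    by (rule M.finsum_reindex) (use f in auto)
  ultimately show ?thesis
    by simp
qed

lemma lsubmoduleD:
  assumes "lsubmodule R M N"
  shows "N \<subseteq> carrier M" "\<zero>\<^bsub>M\<^esub> \<in> N"
    "\<And>x y. x \<in> N \<Longrightarrow> y \<in> N \<Longrightarrow> x \<oplus>\<^bsub>M\<^esub> y \<in> N"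
    "\<And>x. x \<in> N \<Longrightarrow> \<ominus>\<^bsub>M\<^esub> x \<in> N"
    "\<And>a x. a \<in> carrier R \<Longrightarrow> x \<in> N \<Longrightarrow> a \<odot>\<^bsub>M\<^esub> x \<in> N"
  using assms unfolding lsubmodule_def by auto

lemma lsubmodule_minus: "lsubmodule R M N \<Longrightarrow> x \<in> N \<Longrightarrow> y \<in> N \<Longrightarrow> x \<ominus>\<^bsub>M\<^esub> y \<in> N"
  unfolding a_minus_def using lsubmoduleD(3,4) by metis

lemma lsubmodule_carrier: "lsubmodule R M (carrier M)"
  unfolding lsubmodule_def by auto

lemma lsubmodule_zero: "lsubmodule R M {\<zero>\<^bsub>M\<^esub>}"
  unfolding lsubmodule_def by auto

lemma lsubmodule_Int: "lsubmodule R M N \<Longrightarrow> lsubmodule R M P \<Longrightarrow> lsubmodule R M (N \<inter> P)"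
  unfolding lsubmodule_def by blast

lemma lspan_least: "lsubmodule R M N \<Longrightarrow> S \<subseteq> N \<Longrightarrow> lspan R M S \<subseteq> N"
  unfolding lspan_def by blast

lemma lspan_superset: "S \<subseteq> lspan R M S"
  unfolding lspan_def by blast

lemma lspan_lsubmodule:
  assumes "S \<subseteq> carrier M"
  shows "lsubmodule R M (lspan R M S)"
proof -
  let ?F = "{N. lsubmodule R M N \<and> S \<subseteq> N}"
  have sub: "\<And>N. N \<in> ?F \<Longrightarrow> lsubmodule R M N"
    by blast
  have "\<Inter> ?F \<subseteq> carrier M"
    using assms lsubmodule_carrier by blast
  moreover have "\<zero>\<^bsub>M\<^esub> \<in> \<Inter> ?F"
    using lsubmoduleD(2)[OF sub] by blast
  moreover have "x \<oplus>\<^bsub>M\<^esub> y \<in> \<Inter> ?F" if "x \<in> \<Inter> ?F" "y \<in> \<Inter> ?F" for x y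
    using lsubmoduleD(3)[OF sub] that by blast
  moreover have "\<ominus>\<^bsub>M\<^esub> x \<in> \<Inter> ?F" if "x \<in> \<Inter> ?F" for x
    using lsubmoduleD(4)[OF sub] that by blast
  moreover have "a \<odot>\<^bsub>M\<^esub> x \<in> \<Inter> ?F" if "a \<in> carrier R" "x \<in> \<Inter> ?F" for a x
    using lsubmoduleD(5)[OF sub] that by blast
  ultimately show ?thesis
    unfolding lsubmodule_def lspan_def by blast
qed

lemma lspan_subset_carrier: "S \<subseteq> carrier M \<Longrightarrow> lspan R M S \<subseteq> carrier M"
  using lspan_lsubmodule lsubmoduleD(1) by blast

lemma lspan_mono: "T \<subseteq> carrier M \<Longrightarrow> S \<subseteq> T \<Longrightarrow> lspan R M S \<subseteq> lspan R M T"
  by (meson lspan_superset lspan_least lspan_lsubmodule order_trans)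

lemma lspan_zero_set: "S \<subseteq> {\<zero>\<^bsub>M\<^esub>} \<Longrightarrow> lspan R M S = {\<zero>\<^bsub>M\<^esub>}"
  using lspan_least[OF lsubmodule_zero] lspan_lsubmodule[of S] lsubmoduleD(2) by blast

lemma lspan_empty: "lspan R M {} = {\<zero>\<^bsub>M\<^esub>}"
  by (simp add: lspan_zero_set)

lemma lspan_lsubmodule_eq: "lsubmodule R M N \<Longrightarrow> lspan R M N = N"
  using lspan_least lspan_superset by blast

lemma lsubmodule_cyclic_extension:
  assumes sub: "lsubmodule R M P" and z: "z \<in> carrier M"
  shows "lsubmodule R M {a \<odot>\<^bsub>M\<^esub> z \<oplus>\<^bsub>M\<^esub> u | a u. a \<in> carrier R \<and> u \<in> P}"
    (is "lsubmodule R M ?T")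
  unfolding lsubmodule_def
proof (intro conjI ballI)
  show "?T \<subseteq> carrier M"
    using lsubmoduleD(1)[OF sub] z by (auto intro: M.add.m_closed)
  have "\<zero>\<^bsub>M\<^esub> = \<zero>\<^bsub>R\<^esub> \<odot>\<^bsub>M\<^esub> z \<oplus>\<^bsub>M\<^esub> \<zero>\<^bsub>M\<^esub>"
    using z by simp
  then show "\<zero>\<^bsub>M\<^esub> \<in> ?T"
    using lsubmoduleD(2)[OF sub] R.zero_closed by blast
next
  fix x y assume "x \<in> ?T" "y \<in> ?T"
  then obtain a u b v where a: "a \<in> carrier R" "u \<in> P" "x = a \<odot>\<^bsub>M\<^esub> z \<oplus>\<^bsub>M\<^esub> u"
    and b: "b \<in> carrier R" "v \<in> P" "y = b \<odot>\<^bsub>M\<^esub> z \<oplus>\<^bsub>M\<^esub> v"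
    by blast
  have "u \<in> carrier M" "v \<in> carrier M"
    using a b lsubmoduleD(1)[OF sub] by auto
  then have "x \<oplus>\<^bsub>M\<^esub> y = (a \<oplus>\<^bsub>R\<^esub> b) \<odot>\<^bsub>M\<^esub> z \<oplus>\<^bsub>M\<^esub> (u \<oplus>\<^bsub>M\<^esub> v)"
    using a b z by (simp add: smult_l_distr M.a_ac)
  moreover have "a \<oplus>\<^bsub>R\<^esub> b \<in> carrier R" "u \<oplus>\<^bsub>M\<^esub> v \<in> P"
    using a b lsubmoduleD(3)[OF sub] by auto
  ultimately show "x \<oplus>\<^bsub>M\<^esub> y \<in> ?T"
    by blast
next
  fix x assume "x \<in> ?T"
  then obtain a u where a: "a \<in> carrier R" "u \<in> P" "x = a \<odot>\<^bsub>M\<^esub> z \<oplus>\<^bsub>M\<^esub> u"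
    by blast
  have "u \<in> carrier M"
    using a lsubmoduleD(1)[OF sub] by auto
  then have "\<ominus>\<^bsub>M\<^esub> x = (\<ominus>\<^bsub>R\<^esub> a) \<odot>\<^bsub>M\<^esub> z \<oplus>\<^bsub>M\<^esub> (\<ominus>\<^bsub>M\<^esub> u)"
    using a z by (simp add: smult_l_minus M.minus_add)
  moreover have "\<ominus>\<^bsub>R\<^esub> a \<in> carrier R" "\<ominus>\<^bsub>M\<^esub> u \<in> P"
    using a lsubmoduleD(4)[OF sub] by auto
  ultimately show "\<ominus>\<^bsub>M\<^esub> x \<in> ?T"
    by blast
next
  fix b x assume b: "b \<in> carrier R" and "x \<in> ?T"
  then obtain a u where a: "a \<in> carrier R" "u \<in> P" "x = a \<odot>\<^bsub>M\<^esub> z \<oplus>\<^bsub>M\<^esub> u"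
    by blast
  have "u \<in> carrier M"
    using a lsubmoduleD(1)[OF sub] by auto
  then have "b \<odot>\<^bsub>M\<^esub> x = (b \<otimes>\<^bsub>R\<^esub> a) \<odot>\<^bsub>M\<^esub> z \<oplus>\<^bsub>M\<^esub> (b \<odot>\<^bsub>M\<^esub> u)"
    using a b z by (simp add: smult_r_distr smult_assoc1)
  moreover have "b \<otimes>\<^bsub>R\<^esub> a \<in> carrier R" "b \<odot>\<^bsub>M\<^esub> u \<in> P"
    using a b lsubmoduleD(5)[OF sub] by auto
  ultimately show "b \<odot>\<^bsub>M\<^esub> x \<in> ?T"
    by blast
qed

lemma lspan_insert:
  assumes S: "S \<subseteq> carrier M" and z: "z \<in> carrier M"
  shows "lspan R M (insert z S) =
    {a \<odot>\<^bsub>M\<^esub> z \<oplus>\<^bsub>M\<^esub> u | a u. a \<in> carrier R \<and> u \<in> lspan R M S}"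
    (is "?L = ?T")
proof
  let ?P = "lspan R M S"
  note P = lsubmoduleD[OF lspan_lsubmodule[OF S]]
  have "lsubmodule R M ?T"
    using lsubmodule_cyclic_extension[OF lspan_lsubmodule[OF S] z] .
  moreover have "insert z S \<subseteq> ?T"
  proof
    fix x assume "x \<in> insert z S"
    then consider "x = z" | "x \<in> S"
      by blast
    then show "x \<in> ?T"
    proof cases
      case 1
      then have "x = \<one>\<^bsub>R\<^esub> \<odot>\<^bsub>M\<^esub> z \<oplus>\<^bsub>M\<^esub> \<zero>\<^bsub>M\<^esub>"
        using z by simp
      then show ?thesis
        using P(2) R.one_closed by blast
    next
      case 2
      then have "x = \<zero>\<^bsub>R\<^esub> \<odot>\<^bsub>M\<^esub> z \<oplus>\<^bsub>M\<^esub> x"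
        using z S by auto
      then show ?thesis
        using 2 lspan_superset[of S] R.zero_closed by blast
    qed
  qed
  ultimately show "?L \<subseteq> ?T"
    by (rule lspan_least)
  have iS: "insert z S \<subseteq> carrier M"
    using S z by blast
  note L = lsubmoduleD[OF lspan_lsubmodule[OF iS]]
  have zL: "z \<in> ?L" and PL: "?P \<subseteq> ?L"
    using lspan_superset lspan_mono[OF iS] by blast+
  show "?T \<subseteq> ?L"
  proof
    fix x assume "x \<in> ?T"
    then obtain a u where "a \<in> carrier R" "u \<in> ?P" "x = a \<odot>\<^bsub>M\<^esub> z \<oplus>\<^bsub>M\<^esub> u"
      by blast
    then show "x \<in> ?L"
      using L(3)[OF L(5) PL[THEN subsetD]] zL by blast
  qed
qed

lemma lspan_insert_lsubmodule:
  assumes N: "lsubmodule R M N" and w: "w \<in> carrier M"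
  shows "lspan R M (insert w N) = {c \<odot>\<^bsub>M\<^esub> w \<oplus>\<^bsub>M\<^esub> u | c u. c \<in> carrier R \<and> u \<in> N}"
  using lspan_insert[OF lsubmoduleD(1)[OF N] w] lspan_lsubmodule_eq[OF N] by simp

lemma lspan_singleton:
  assumes z: "z \<in> carrier M"
  shows "lspan R M {z} = {a \<odot>\<^bsub>M\<^esub> z | a. a \<in> carrier R}"
proof -
  have "lspan R M {z} = {a \<odot>\<^bsub>M\<^esub> z \<oplus>\<^bsub>M\<^esub> u | a u. a \<in> carrier R \<and> u \<in> {\<zero>\<^bsub>M\<^esub>}}"
    using lspan_insert[of "{}" z] z by (simp add: lspan_empty)
  also have "\<dots> = {a \<odot>\<^bsub>M\<^esub> z | a. a \<in> carrier R}"
  proof (intro equalityI subsetI)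
    fix x assume "x \<in> {a \<odot>\<^bsub>M\<^esub> z \<oplus>\<^bsub>M\<^esub> u | a u. a \<in> carrier R \<and> u \<in> {\<zero>\<^bsub>M\<^esub>}}"
    then obtain a where "a \<in> carrier R" "x = a \<odot>\<^bsub>M\<^esub> z \<oplus>\<^bsub>M\<^esub> \<zero>\<^bsub>M\<^esub>"
      by blast
    then show "x \<in> {a \<odot>\<^bsub>M\<^esub> z | a. a \<in> carrier R}"
      using z by auto
  next
    fix x assume "x \<in> {a \<odot>\<^bsub>M\<^esub> z | a. a \<in> carrier R}"
    then obtain a where a: "a \<in> carrier R" "x = a \<odot>\<^bsub>M\<^esub> z"
      by blast
    then have "x = a \<odot>\<^bsub>M\<^esub> z \<oplus>\<^bsub>M\<^esub> \<zero>\<^bsub>M\<^esub>"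
      using z by simp
    then show "x \<in> {a \<odot>\<^bsub>M\<^esub> z \<oplus>\<^bsub>M\<^esub> u | a u. a \<in> carrier R \<and> u \<in> {\<zero>\<^bsub>M\<^esub>}}"
      using a by blast
  qed
  finally show ?thesis .
qed

lemma EndD:
  assumes "f \<in> End R M"
  shows "\<And>x. x \<in> carrier M \<Longrightarrow> f x \<in> carrier M"
    "\<And>x y. x \<in> carrier M \<Longrightarrow> y \<in> carrier M \<Longrightarrow> f (x \<oplus>\<^bsub>M\<^esub> y) = f x \<oplus>\<^bsub>M\<^esub> f y"
    "\<And>a x. a \<in> carrier R \<Longrightarrow> x \<in> carrier M \<Longrightarrow> f (a \<odot>\<^bsub>M\<^esub> x) = a \<odot>\<^bsub>M\<^esub> f x"
  using assms unfolding End_def by auto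

lemma End_zero: "f \<in> End R M \<Longrightarrow> f \<zero>\<^bsub>M\<^esub> = \<zero>\<^bsub>M\<^esub>"
  using EndD(3)[of f "\<zero>\<^bsub>R\<^esub>" "\<zero>\<^bsub>M\<^esub>"] EndD(1)[of f "\<zero>\<^bsub>M\<^esub>"] by simp

lemma End_minus: "f \<in> End R M \<Longrightarrow> x \<in> carrier M \<Longrightarrow> f (\<ominus>\<^bsub>M\<^esub> x) = \<ominus>\<^bsub>M\<^esub> f x"
  using EndD(3)[of f "\<ominus>\<^bsub>R\<^esub> \<one>\<^bsub>R\<^esub>" x] EndD(1)[of f x] by (simp add: smult_l_minus)

lemma End_finsum:
  assumes f: "f \<in> End R M"
  shows "finite A \<Longrightarrow> g \<in> A \<rightarrow> carrier M \<Longrightarrow>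
    f (\<Oplus>\<^bsub>M\<^esub>i\<in>A. g i) = (\<Oplus>\<^bsub>M\<^esub>i\<in>A. f (g i))"
proof (induction A rule: finite_induct)
  case empty
  then show ?case by (simp add: End_zero[OF f])
next
  case (insert x F)
  then show ?case
    using EndD[OF f] by (simp add: M.finsum_insert M.finsum_closed Pi_iff)
qed

lemma End_id: "(\<lambda>x. x) \<in> End R M"
  unfolding End_def by auto

lemma End_comp: "f \<in> End R M \<Longrightarrow> g \<in> End R M \<Longrightarrow> (\<lambda>x. f (g x)) \<in> End R M"
  unfolding End_def by (auto simp: Pi_def)

lemma End_funpow: "f \<in> End R M \<Longrightarrow> f ^^ k \<in> End R M"
  by (induction k) (simp_all add: id_def comp_def End_id End_comp)

lemma End_finsum_maps:
  assumes "finite A" "\<And>i. i \<in> A \<Longrightarrow> f i \<in> End R M"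
  shows "(\<lambda>z. \<Oplus>\<^bsub>M\<^esub>i\<in>A. f i z) \<in> End R M"
  unfolding End_def
proof (intro CollectI conjI ballI funcsetI)
  note f = EndD[OF assms(2)]
  show "(\<Oplus>\<^bsub>M\<^esub>i\<in>A. f i z) \<in> carrier M" if "z \<in> carrier M" for z
    using f(1) that by (auto intro: M.finsum_closed)
  show "(\<Oplus>\<^bsub>M\<^esub>i\<in>A. f i (x \<oplus>\<^bsub>M\<^esub> y)) = (\<Oplus>\<^bsub>M\<^esub>i\<in>A. f i x) \<oplus>\<^bsub>M\<^esub> (\<Oplus>\<^bsub>M\<^esub>i\<in>A. f i y)"
    if "x \<in> carrier M" "y \<in> carrier M" for x y
  proof -
    have "(\<Oplus>\<^bsub>M\<^esub>i\<in>A. f i (x \<oplus>\<^bsub>M\<^esub> y)) = (\<Oplus>\<^bsub>M\<^esub>i\<in>A. f i x \<oplus>\<^bsub>M\<^esub> f i y)"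
      using f(1,2) that by (intro M.finsum_cong') auto
    also have "\<dots> = (\<Oplus>\<^bsub>M\<^esub>i\<in>A. f i x) \<oplus>\<^bsub>M\<^esub> (\<Oplus>\<^bsub>M\<^esub>i\<in>A. f i y)"
      using f(1) that by (intro M.finsum_addf) auto
    finally show ?thesis .
  qed
  show "(\<Oplus>\<^bsub>M\<^esub>i\<in>A. f i (a \<odot>\<^bsub>M\<^esub> x)) = a \<odot>\<^bsub>M\<^esub> (\<Oplus>\<^bsub>M\<^esub>i\<in>A. f i x)"
    if "a \<in> carrier R" "x \<in> carrier M" for a x
  proof -
    have "(\<Oplus>\<^bsub>M\<^esub>i\<in>A. f i (a \<odot>\<^bsub>M\<^esub> x)) = (\<Oplus>\<^bsub>M\<^esub>i\<in>A. a \<odot>\<^bsub>M\<^esub> f i x)"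
      using f(1,3) that by (intro M.finsum_cong') auto
    also have "\<dots> = a \<odot>\<^bsub>M\<^esub> (\<Oplus>\<^bsub>M\<^esub>i\<in>A. f i x)"
      using f(1) that assms(1) by (intro finsum_smult_ldistr[symmetric]) auto
    finally show ?thesis .
  qed
qed

lemma End_image_lspan_subset:
  assumes f: "f \<in> End R M" and S: "S \<subseteq> carrier M"
  shows "f ` lspan R M S \<subseteq> lspan R M (f ` S)"
proof -
  have "f ` S \<subseteq> carrier M"
    using S EndD(1)[OF f] by auto
  note P = lspan_lsubmodule[OF this]
  let ?N = "{x \<in> carrier M. f x \<in> lspan R M (f ` S)}"
  have "lsubmodule R M ?N"
    unfolding lsubmodule_def
    using EndD[OF f] End_zero[OF f] End_minus[OF f] lsubmoduleD[OF P] by auto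
  moreover have "S \<subseteq> ?N"
    using S lspan_superset[of "f ` S"] by blast
  ultimately show ?thesis
    using lspan_least by blast
qed

lemma End_eq_on_lspan:
  assumes f: "f \<in> End R M" and g: "g \<in> End R M" and S: "lspan R M S = carrier M"
    and eq: "\<And>s. s \<in> S \<Longrightarrow> f s = g s" and x: "x \<in> carrier M"
  shows "f x = g x"
proof -
  let ?N = "{x \<in> carrier M. f x = g x}"
  have "lsubmodule R M ?N"
    unfolding lsubmodule_def
    using EndD[OF f] EndD[OF g] End_zero[OF f] End_zero[OF g] End_minus[OF f] End_minus[OF g]
    by auto
  moreover have "S \<subseteq> ?N"
    using S lspan_superset[of S] eq by blast
  ultimately show ?thesis
    using lspan_least S x by blast
qed

lemma End_funpow_commute:
  assumes "f \<in> End R M" "p \<in> End R M" "\<And>z. z \<in> carrier M \<Longrightarrow> f (p z) = p (f z)"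
    and "x \<in> carrier M"
  shows "f ((p ^^ k) x) = (p ^^ k) (f x)"
  using assms(4)
proof (induction k arbitrary: x)
  case (Suc k)
  then show ?case
    using EndD(1)[OF End_funpow[OF assms(2)]] assms(3) by simp
qed simp

lemma End_finsum_funpow_commute:
  assumes \<psi>: "\<psi> \<in> End R M" and \<phi>: "\<phi> \<in> End R M"
    and comm: "\<And>z. z \<in> carrier M \<Longrightarrow> \<psi> (\<phi> z) = \<phi> (\<psi> z)"
    and A: "finite A" and a: "\<And>i. i \<in> A \<Longrightarrow> a i \<in> carrier R" and v: "v \<in> carrier M"
  shows "\<psi> (\<Oplus>\<^bsub>M\<^esub>i\<in>A. a i \<odot>\<^bsub>M\<^esub> (\<phi> ^^ h i) v) = (\<Oplus>\<^bsub>M\<^esub>i\<in>A. a i \<odot>\<^bsub>M\<^esub> (\<phi> ^^ h i) (\<psi> v))"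
proof -
  have closed: "(\<phi> ^^ k) x \<in> carrier M" if "x \<in> carrier M" for k x
    using EndD(1)[OF End_funpow[OF \<phi>] that] .
  have "\<psi> (\<Oplus>\<^bsub>M\<^esub>i\<in>A. a i \<odot>\<^bsub>M\<^esub> (\<phi> ^^ h i) v) = (\<Oplus>\<^bsub>M\<^esub>i\<in>A. \<psi> (a i \<odot>\<^bsub>M\<^esub> (\<phi> ^^ h i) v))"
    using End_finsum[OF \<psi> A] a closed[OF v] by auto
  also have "\<dots> = (\<Oplus>\<^bsub>M\<^esub>i\<in>A. a i \<odot>\<^bsub>M\<^esub> (\<phi> ^^ h i) (\<psi> v))"
  proof (rule M.finsum_cong')
    show "(\<lambda>i. a i \<odot>\<^bsub>M\<^esub> (\<phi> ^^ h i) (\<psi> v)) \<in> A \<rightarrow> carrier M"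
      using a closed[OF EndD(1)[OF \<psi> v]] by auto
    show "\<psi> (a i \<odot>\<^bsub>M\<^esub> (\<phi> ^^ h i) v) = a i \<odot>\<^bsub>M\<^esub> (\<phi> ^^ h i) (\<psi> v)" if "i \<in> A" for i
      using EndD(3)[OF \<psi> a[OF that] closed[OF v]] End_funpow_commute[OF \<psi> \<phi> comm v] by simp
  qed simp
  finally show ?thesis .
qed

lemma centralizer_iff:
  "\<psi> \<in> centralizer R M \<alpha> \<longleftrightarrow> \<psi> \<in> End R M \<and> (\<forall>x\<in>carrier M. \<psi> (\<alpha> x) = \<alpha> (\<psi> x))"
  unfolding centralizer_def by blast

end

section \<open>Left ideals and the radical of a local ring\<close>

lemma left_ideal_iff:
  fixes R (structure)
  shows "left_ideal R K \<longleftrightarrow> K \<subseteq> carrier R \<and> \<zero> \<in> K \<and> (\<forall>x\<in>K. \<forall>y\<in>K. x \<oplus> y \<in> K) \<and>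
     (\<forall>x\<in>K. \<ominus> x \<in> K) \<and> (\<forall>r\<in>carrier R. \<forall>x\<in>K. r \<otimes> x \<in> K)"
  unfolding left_ideal_def additive_subgroup_def subgroup_def a_inv_def Ball_def by (simp, blast)

lemma left_ideal_principal:
  fixes R (structure)
  assumes "ring R" and u: "u \<in> carrier R"
  shows "left_ideal R {a \<otimes> u | a. a \<in> carrier R}"
  unfolding left_ideal_iff
proof (intro conjI ballI)
  interpret ring R by fact
  let ?L = "{a \<otimes> u | a. a \<in> carrier R}"
  show "?L \<subseteq> carrier R"
    using u m_closed by blast
  have "\<zero> = \<zero> \<otimes> u"
    using u by simp
  then show "\<zero> \<in> ?L"
    using zero_closed by blast
  fix x assume "x \<in> ?L"
  then obtain a where a: "a \<in> carrier R" "x = a \<otimes> u"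
    by blast
  have "\<ominus> x = (\<ominus> a) \<otimes> u"
    using a u by (simp add: l_minus)
  then show "\<ominus> x \<in> ?L"
    using a_inv_closed[OF a(1)] by blast
  show "r \<otimes> x \<in> ?L" if r: "r \<in> carrier R" for r
  proof -
    have "r \<otimes> x = (r \<otimes> a) \<otimes> u"
      using a u r by (simp add: m_assoc)
    then show ?thesis
      using m_closed[OF r a(1)] by blast
  qed
  fix y assume "y \<in> ?L"
  then obtain b where b: "b \<in> carrier R" "y = b \<otimes> u"
    by blast
  have "x \<oplus> y = (a \<oplus> b) \<otimes> u"
    using a b u by (simp add: l_distr)
  then show "x \<oplus> y \<in> ?L"
    using add.m_closed[OF a(1) b(1)] by blast
qed

lemma left_ideal_Union_chain:
  fixes R (structure)
  assumes "C \<noteq> {}" and ideals: "\<And>K. K \<in> C \<Longrightarrow> left_ideal R K"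
    and chain: "\<And>K K'. K \<in> C \<Longrightarrow> K' \<in> C \<Longrightarrow> K \<subseteq> K' \<or> K' \<subseteq> K"
  shows "left_ideal R (\<Union>C)"
  unfolding left_ideal_iff
proof (intro conjI ballI)
  note ideal = ideals[unfolded left_ideal_iff]
  obtain K0 where "K0 \<in> C"
    using assms(1) by blast
  then show "\<Union>C \<subseteq> carrier R" "\<zero> \<in> \<Union>C"
    using ideal by blast+
next
  fix x y assume "x \<in> \<Union>C" "y \<in> \<Union>C"
  then obtain K K' where KK': "K \<in> C" "K' \<in> C" "x \<in> K" "y \<in> K'"
    by blast
  note ideal = ideals[unfolded left_ideal_iff]
  from chain[OF KK'(1,2)] show "x \<oplus> y \<in> \<Union>C"
  proof
    assume "K \<subseteq> K'"
    then show ?thesis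
      using KK' ideal[OF KK'(2)] by blast
  next
    assume "K' \<subseteq> K"
    then show ?thesis
      using KK' ideal[OF KK'(1)] by blast
  qed
next
  note ideal = ideals[unfolded left_ideal_iff]
  show "\<ominus> x \<in> \<Union>C" if "x \<in> \<Union>C" for x
    using that ideal by blast
  show "r \<otimes> x \<in> \<Union>C" if "r \<in> carrier R" "x \<in> \<Union>C" for r x
    using that ideal by blast
qed

lemma left_ideal_one_eq_carrier:
  fixes R (structure)
  assumes "ring R" and K: "left_ideal R K" and "\<one> \<in> K"
  shows "K = carrier R"
proof -
  interpret ring R by fact
  have "r \<otimes> \<one> \<in> K" if "r \<in> carrier R" for r
    using that K \<open>\<one> \<in> K\<close> unfolding left_ideal_iff by blast
  then have "carrier R \<subseteq> K"
    by auto
  then show ?thesis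
    using K unfolding left_ideal_iff by blast
qed

lemma maximal_left_ideal_superset:
  fixes R (structure)
  assumes "ring R" and L: "left_ideal R L" and one: "\<one> \<notin> L"
  obtains K where "maximal_left_ideal R K" "L \<subseteq> K" "\<one> \<notin> K"
proof -
  interpret ring R by fact
  define A where "A = {K. left_ideal R K \<and> L \<subseteq> K \<and> \<one> \<notin> K}"
  have "\<exists>K\<in>A. \<forall>K'\<in>A. K \<subseteq> K' \<longrightarrow> K' = K"
  proof (rule subset_Zorn_nonempty)
    show "A \<noteq> {}"
      unfolding A_def using L one by blast
  next
    fix C assume C: "C \<noteq> {}" "subset.chain A C"
    then have CA: "C \<subseteq> A" and chain: "\<And>K K'. K \<in> C \<Longrightarrow> K' \<in> C \<Longrightarrow> K \<subseteq> K' \<or> K' \<subseteq> K"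
      unfolding subset_chain_def by blast+
    have "left_ideal R (\<Union>C)"
      using left_ideal_Union_chain[OF C(1) _ chain] CA unfolding A_def by blast
    moreover have "L \<subseteq> \<Union>C" "\<one> \<notin> \<Union>C"
      using CA C(1) unfolding A_def by blast+
    ultimately show "\<Union>C \<in> A"
      unfolding A_def by blast
  qed
  then obtain K where "K \<in> A" and Kmax: "\<And>K'. K' \<in> A \<Longrightarrow> K \<subseteq> K' \<Longrightarrow> K' = K"
    by blast
  then have K: "left_ideal R K" "L \<subseteq> K" "\<one> \<notin> K"
    unfolding A_def by blast+
  have "K' = K" if K': "left_ideal R K'" "K \<subseteq> K'" "K' \<noteq> carrier R" for K'
  proof (rule Kmax)
    show "K' \<in> A"
      unfolding A_def using K' K(2) left_ideal_one_eq_carrier[OF \<open>ring R\<close> K'(1)] by blast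
  qed (use K' in blast)
  moreover have "K \<noteq> carrier R"
    using K(3) one_closed by blast
  ultimately have "maximal_left_ideal R K"
    unfolding maximal_left_ideal_def using K(1) by blast
  then show thesis
    using K that by blast
qed

lemma jacobson_subset: "jacobson R \<subseteq> carrier R"
  unfolding jacobson_def by blast

lemma zero_in_jacobson:
  assumes "ring R"
  shows "\<zero>\<^bsub>R\<^esub> \<in> jacobson R"
proof -
  interpret ring R by fact
  have "\<zero>\<^bsub>R\<^esub> \<in> I" if "maximal_left_ideal R I" for I
  proof -
    have "additive_subgroup I R"
      using that unfolding maximal_left_ideal_def left_ideal_def by blast
    then show ?thesis
      by (rule additive_subgroup.zero_closed)
  qed
  then show ?thesis
    using zero_closed unfolding jacobson_def by blast
qed

lemma one_minus_jacobson_left_invertible: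
  fixes R (structure)
  assumes "ring R" and t: "t \<in> jacobson R"
  obtains a where "a \<in> carrier R" "a \<otimes> (\<one> \<ominus> t) = \<one>"
proof -
  interpret ring R by fact
  have tR: "t \<in> carrier R"
    using subsetD[OF jacobson_subset t] .
  let ?u = "\<one> \<ominus> t"
  have uR: "?u \<in> carrier R"
    using tR by simp
  let ?L = "{a \<otimes> ?u | a. a \<in> carrier R}"
  have "\<one> \<in> ?L"
  proof (rule ccontr)
    assume "\<one> \<notin> ?L"
    with left_ideal_principal[OF \<open>ring R\<close> uR]
    obtain K where K: "maximal_left_ideal R K" "?L \<subseteq> K" "\<one> \<notin> K"
      by (rule maximal_left_ideal_superset[OF \<open>ring R\<close>])
    have "?u = \<one> \<otimes> ?u"
      using uR by simp
    then have "?u \<in> K"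
      using K(2) one_closed by blast
    moreover have "t \<in> K"
      using t K(1) unfolding jacobson_def by blast
    moreover have "?u \<oplus> t = \<one>"
      using tR by (simp add: a_minus_def a_assoc l_neg)
    moreover have "left_ideal R K"
      using K(1) unfolding maximal_left_ideal_def by blast
    ultimately have "\<one> \<in> K"
      unfolding left_ideal_iff by metis
    with K(3) show False ..
  qed
  then obtain a where "a \<in> carrier R" "\<one> = a \<otimes> ?u"
    by blast
  then show thesis
    using that by simp
qed

lemma rcos_self_mem:
  fixes R (structure)
  assumes "ring R" "\<zero> \<in> I" "r \<in> carrier R"
  shows "r \<in> I +> r"
proof -
  interpret ring R by fact
  have "r = \<zero> \<oplus> r"
    using assms by simp
  then show ?thesis
    using assms(2) unfolding a_r_coset_def' by blast
qed

lemma FactRing_simps: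
  fixes R (structure) and A B :: "'a set"
  shows "carrier (R Quot I) = (\<Union>a\<in>carrier R. {I +> a})"
    "\<zero>\<^bsub>R Quot I\<^esub> = I" "\<one>\<^bsub>R Quot I\<^esub> = I +> \<one>"
    "A \<otimes>\<^bsub>R Quot I\<^esub> B = rcoset_mult R I A B"
  unfolding FactRing_def by (simp_all add: A_RCOSETS_def')

lemma rcos_mult_subset:
  fixes R (structure)
  assumes "a \<in> A" "b \<in> B"
  shows "I +> (a \<otimes> b) \<subseteq> rcoset_mult R I A B"
  using assms unfolding rcoset_mult_def by blast

text \<open>The radical, defined through left ideals only, is closed under right multiplication
  because it is the zero of the quotient ring.\<close>

lemma jacobson_mult_right_closed:
  fixes R (structure)
  assumes loc: "local_ring R" and j: "j \<in> jacobson R" and r: "r \<in> carrier R"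
  shows "j \<otimes> r \<in> jacobson R"
proof -
  let ?J = "jacobson R"
  have "ring R"
    using loc unfolding local_ring_def by blast
  interpret ring R by fact
  interpret Q: ring "R Quot ?J"
    using loc unfolding local_ring_def division_ring_def by blast
  have "?J +> r \<in> carrier (R Quot ?J)"
    using r unfolding FactRing_simps by blast
  from Q.l_null[OF this] have "rcoset_mult R ?J ?J (?J +> r) = ?J"
    unfolding FactRing_simps .
  moreover have "?J +> (j \<otimes> r) \<subseteq> rcoset_mult R ?J ?J (?J +> r)"
    using rcos_mult_subset j rcos_self_mem[OF \<open>ring R\<close> zero_in_jacobson[OF \<open>ring R\<close>] r] .
  moreover have "j \<otimes> r \<in> ?J +> (j \<otimes> r)"
    using rcos_self_mem[OF \<open>ring R\<close> zero_in_jacobson[OF \<open>ring R\<close>]]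
      m_closed[OF subsetD[OF jacobson_subset j] r] .
  ultimately show ?thesis
    by blast
qed

lemma local_ring_left_inverse_mod_jacobson:
  fixes R (structure)
  assumes loc: "local_ring R" and r: "r \<in> carrier R" and r_notin: "r \<notin> jacobson R"
  obtains s h where "s \<in> carrier R" "h \<in> jacobson R" "s \<otimes> r = h \<oplus> \<one>"
proof -
  let ?J = "jacobson R"
  let ?Q = "R Quot ?J"
  have "ring R"
    using loc unfolding local_ring_def by blast
  interpret ring R by fact
  have self: "x \<in> ?J +> x" if "x \<in> carrier R" for x
    using rcos_self_mem[OF \<open>ring R\<close> zero_in_jacobson[OF \<open>ring R\<close>] that] .
  have "?J +> r \<in> carrier ?Q" "?J +> r \<noteq> \<zero>\<^bsub>?Q\<^esub>"
    using r self[OF r] r_notin unfolding FactRing_simps by blast+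
  then have "?J +> r \<in> Units ?Q"
    using loc unfolding local_ring_def division_ring_def by blast
  then obtain Y where Y: "Y \<in> carrier ?Q" "Y \<otimes>\<^bsub>?Q\<^esub> (?J +> r) = \<one>\<^bsub>?Q\<^esub>"
    unfolding Units_def by blast
  from Y(1) obtain s where s: "s \<in> carrier R" "Y = ?J +> s"
    unfolding FactRing_simps by blast
  have "s \<in> Y"
    using self[OF s(1)] s(2) by simp
  then have "?J +> (s \<otimes> r) \<subseteq> rcoset_mult R ?J Y (?J +> r)"
    by (rule rcos_mult_subset[OF _ self[OF r]])
  also have "\<dots> = ?J +> \<one>"
    using Y(2) unfolding FactRing_simps .
  finally have "s \<otimes> r \<in> ?J +> \<one>"
    using self[OF m_closed[OF s(1) r]] by blast
  then obtain h where "h \<in> ?J" "s \<otimes> r = h \<oplus> \<one>"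
    unfolding a_r_coset_def' by blast
  with s(1) show thesis
    by (rule that)
qed

lemma (in left_mod) jacobson_fixed_point_eq_zero:
  assumes t: "t \<in> jacobson R" and v: "v \<in> carrier M" and fixed: "t \<odot>\<^bsub>M\<^esub> v = v"
  shows "v = \<zero>\<^bsub>M\<^esub>"
proof -
  have tR: "t \<in> carrier R"
    using subsetD[OF jacobson_subset t] .
  obtain a where a: "a \<in> carrier R" "a \<otimes>\<^bsub>R\<^esub> (\<one>\<^bsub>R\<^esub> \<ominus>\<^bsub>R\<^esub> t) = \<one>\<^bsub>R\<^esub>"
    using one_minus_jacobson_left_invertible[OF R.ring_axioms t] by blast
  have "(\<one>\<^bsub>R\<^esub> \<ominus>\<^bsub>R\<^esub> t) \<odot>\<^bsub>M\<^esub> v = \<zero>\<^bsub>M\<^esub>"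
    using tR v fixed by (simp add: smult_minus_distr M.r_neg M.minus_eq)
  then have "(a \<otimes>\<^bsub>R\<^esub> (\<one>\<^bsub>R\<^esub> \<ominus>\<^bsub>R\<^esub> t)) \<odot>\<^bsub>M\<^esub> v = \<zero>\<^bsub>M\<^esub>"
    using a(1) tR v by (simp add: smult_assoc1)
  then show ?thesis
    using a(2) v by simp
qed

section \<open>Semisimple modules over a local ring\<close>

locale semisimple_local = left_mod +
  assumes local_ring: "local_ring R" and semisimple: "semisimple R M"
begin

lemma semisimple_complement:
  assumes "lsubmodule R M N"
  obtains N' where "lsubmodule R M N'" "N \<inter> N' = {\<zero>\<^bsub>M\<^esub>}"
    "\<And>x. x \<in> carrier M \<Longrightarrow> \<exists>u\<in>N. \<exists>v\<in>N'. x = u \<oplus>\<^bsub>M\<^esub> v"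
  using semisimple assms unfolding semisimple_def by metis

text \<open>Splitting \<open>x\<close> along \<open>Rjx \<oplus> N'\<close> shows \<open>jx = (jr)(jx)\<close> for some \<open>r\<close>, with \<open>jr\<close> in the radical.\<close>

lemma jacobson_smult_eq_zero:
  assumes j: "j \<in> jacobson R" and x: "x \<in> carrier M"
  shows "j \<odot>\<^bsub>M\<^esub> x = \<zero>\<^bsub>M\<^esub>"
proof -
  have jR: "j \<in> carrier R"
    using subsetD[OF jacobson_subset j] .
  define v where "v = j \<odot>\<^bsub>M\<^esub> x"
  have vM: "v \<in> carrier M"
    unfolding v_def using jR x by simp
  define N where "N = lspan R M {v}"
  have N: "lsubmodule R M N"
    unfolding N_def using lspan_lsubmodule vM by blast
  have N_eq: "N = {a \<odot>\<^bsub>M\<^esub> v | a. a \<in> carrier R}"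
    unfolding N_def using lspan_singleton[OF vM] .
  obtain N' where N': "lsubmodule R M N'" "N \<inter> N' = {\<zero>\<^bsub>M\<^esub>}"
    and decomp: "\<And>x. x \<in> carrier M \<Longrightarrow> \<exists>u\<in>N. \<exists>v\<in>N'. x = u \<oplus>\<^bsub>M\<^esub> v"
    using semisimple_complement[OF N] by blast
  obtain u q where uq: "u \<in> N" "q \<in> N'" "x = u \<oplus>\<^bsub>M\<^esub> q"
    using decomp[OF x] by blast
  have uM: "u \<in> carrier M" and qM: "q \<in> carrier M"
    using uq lsubmoduleD(1)[OF N] lsubmoduleD(1)[OF N'(1)] by blast+
  have v_split: "v = j \<odot>\<^bsub>M\<^esub> u \<oplus>\<^bsub>M\<^esub> j \<odot>\<^bsub>M\<^esub> q"
    unfolding v_def using uq uM qM jR by (simp add: smult_r_distr)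
  have "v \<in> N"
    unfolding N_def using lspan_superset by blast
  moreover have "j \<odot>\<^bsub>M\<^esub> q = \<ominus>\<^bsub>M\<^esub> (j \<odot>\<^bsub>M\<^esub> u) \<oplus>\<^bsub>M\<^esub> v"
    using v_split jR uM qM by (simp add: M.a_assoc[symmetric] M.l_neg)
  ultimately have "j \<odot>\<^bsub>M\<^esub> q \<in> N"
    using lsubmoduleD(3,4,5)[OF N] jR uq(1) by metis
  moreover have "j \<odot>\<^bsub>M\<^esub> q \<in> N'"
    using lsubmoduleD(5)[OF N'(1) jR uq(2)] .
  ultimately have jq: "j \<odot>\<^bsub>M\<^esub> q = \<zero>\<^bsub>M\<^esub>"
    using N'(2) by blast
  obtain r where r: "r \<in> carrier R" "u = r \<odot>\<^bsub>M\<^esub> v"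
    using uq(1) unfolding N_eq by blast
  have tJ: "j \<otimes>\<^bsub>R\<^esub> r \<in> jacobson R"
    using jacobson_mult_right_closed[OF local_ring j r(1)] .
  have "v = j \<odot>\<^bsub>M\<^esub> u"
    using v_split jq jR uM by simp
  also have "\<dots> = (j \<otimes>\<^bsub>R\<^esub> r) \<odot>\<^bsub>M\<^esub> v"
    using r jR vM by (simp add: smult_assoc1)
  finally have "v = \<zero>\<^bsub>M\<^esub>"
    using jacobson_fixed_point_eq_zero[OF tJ vM] by simp
  then show ?thesis
    unfolding v_def .
qed

lemma smult_left_inverse:
  assumes r: "r \<in> carrier R" and r_notin: "r \<notin> jacobson R"
  obtains s where "s \<in> carrier R" "\<And>x. x \<in> carrier M \<Longrightarrow> s \<odot>\<^bsub>M\<^esub> (r \<odot>\<^bsub>M\<^esub> x) = x"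
proof -
  obtain s h where s: "s \<in> carrier R" "h \<in> jacobson R" "s \<otimes>\<^bsub>R\<^esub> r = h \<oplus>\<^bsub>R\<^esub> \<one>\<^bsub>R\<^esub>"
    using local_ring_left_inverse_mod_jacobson[OF local_ring r r_notin] by blast
  have hR: "h \<in> carrier R"
    using subsetD[OF jacobson_subset s(2)] .
  have "s \<odot>\<^bsub>M\<^esub> (r \<odot>\<^bsub>M\<^esub> x) = x" if x: "x \<in> carrier M" for x
  proof -
    have "s \<odot>\<^bsub>M\<^esub> (r \<odot>\<^bsub>M\<^esub> x) = h \<odot>\<^bsub>M\<^esub> x \<oplus>\<^bsub>M\<^esub> x"
      using smult_assoc1[OF s(1) r x, symmetric] s(3) hR x by (simp add: smult_l_distr)
    also have "\<dots> = x"
      using jacobson_smult_eq_zero[OF s(2) x] x by simp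
    finally show ?thesis .
  qed
  with s(1) show thesis
    by (rule that)
qed

lemma smult_eq_zero_imp_jacobson:
  assumes r: "r \<in> carrier R" and x: "x \<in> carrier M" and "r \<odot>\<^bsub>M\<^esub> x = \<zero>\<^bsub>M\<^esub>"
    and "x \<noteq> \<zero>\<^bsub>M\<^esub>"
  shows "r \<in> jacobson R"
proof (rule ccontr)
  assume "r \<notin> jacobson R"
  then obtain s where "s \<in> carrier R" "s \<odot>\<^bsub>M\<^esub> (r \<odot>\<^bsub>M\<^esub> x) = x"
    using smult_left_inverse[OF r] x by metis
  then show False
    using assms(3,4) by simp
qed

lemma lspan_insert_no_intermediate:
  assumes S: "S \<subseteq> carrier M" and z: "z \<in> carrier M" and L: "lsubmodule R M L"
    and lower: "lspan R M S \<subseteq> L" and upper: "L \<subseteq> lspan R M (insert z S)"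
  shows "L = lspan R M S \<or> L = lspan R M (insert z S)"
proof (cases "L = lspan R M S")
  case False
  then obtain q where q: "q \<in> L" "q \<notin> lspan R M S"
    using lower by blast
  then obtain a u where au: "a \<in> carrier R" "u \<in> lspan R M S" "q = a \<odot>\<^bsub>M\<^esub> z \<oplus>\<^bsub>M\<^esub> u"
    using upper unfolding lspan_insert[OF S z] by blast
  have uM: "u \<in> carrier M"
    using au(2) lspan_subset_carrier[OF S] by blast
  have "a \<notin> jacobson R"
  proof
    assume "a \<in> jacobson R"
    then have "q = u"
      using au(3) jacobson_smult_eq_zero z uM by simp
    then show False
      using q au by simp
  qed
  then obtain s where s: "s \<in> carrier R" "\<And>x. x \<in> carrier M \<Longrightarrow> s \<odot>\<^bsub>M\<^esub> (a \<odot>\<^bsub>M\<^esub> x) = x"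
    using smult_left_inverse[OF au(1)] by blast
  have "a \<odot>\<^bsub>M\<^esub> z = q \<ominus>\<^bsub>M\<^esub> u"
    using au uM z by (simp add: M.minus_eq M.a_assoc M.r_neg)
  moreover have "u \<in> L"
    using lower au(2) by blast
  ultimately have "a \<odot>\<^bsub>M\<^esub> z \<in> L"
    using lsubmodule_minus[OF L q(1)] by simp
  then have "z \<in> L"
    using lsubmoduleD(5)[OF L s(1)] s(2)[OF z] by metis
  then have "lspan R M (insert z S) \<subseteq> L"
    using lspan_least[OF L] lower lspan_superset[of S] by blast
  then show ?thesis
    using upper by blast
qed simp

end

section \<open>Composition length\<close>

definition composition_series_of ::
  "('a, 'c) ring_scheme \<Rightarrow> ('a, 'b, 'd) module_scheme \<Rightarrow> (nat \<Rightarrow> 'b set) \<Rightarrow> nat \<Rightarrow> 'b set \<Rightarrow> bool"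
  where "composition_series_of R M N k P \<longleftrightarrow>
     (\<forall>i\<le>k. lsubmodule R M (N i)) \<and> N 0 = {\<zero>\<^bsub>M\<^esub>} \<and> N k = P \<and>
     (\<forall>i<k. N i \<subset> N (Suc i) \<and> \<not> (\<exists>L. lsubmodule R M L \<and> N i \<subset> L \<and> L \<subset> N (Suc i)))"

lemma composition_series_iff:
  "composition_series R M N k \<longleftrightarrow> composition_series_of R M N k (carrier M)"
  unfolding composition_series_def composition_series_of_def by simp

definition lsum :: "('a, 'b, 'd) module_scheme \<Rightarrow> 'b set \<Rightarrow> 'b set \<Rightarrow> 'b set"
  where "lsum M N P = {u \<oplus>\<^bsub>M\<^esub> v | u v. u \<in> N \<and> v \<in> P}"

lemma lsum_iff: "x \<in> lsum M N P \<longleftrightarrow> (\<exists>u\<in>N. \<exists>v\<in>P. x = u \<oplus>\<^bsub>M\<^esub> v)"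
  unfolding lsum_def by blast

lemma lsum_mono: "N \<subseteq> N' \<Longrightarrow> lsum M N P \<subseteq> lsum M N' P"
  unfolding lsum_def by blast

lemma chain_mono_le:
  fixes B :: "nat \<Rightarrow> 'a set"
  assumes "\<And>i. i < m \<Longrightarrow> B i \<subseteq> B (Suc i)" "i \<le> j" "j \<le> m"
  shows "B i \<subseteq> B j"
proof -
  have "{i..<j} \<subseteq> {..<m}"
    using assms(3) by auto
  then show ?thesis
    using lift_Suc_mono_le_ivl[of "{..<m}" B i j] assms(1,2) by blast
qed

lemma chain_two_values_changes_le_one:
  fixes B :: "nat \<Rightarrow> 'a set"
  assumes mono: "\<And>i. i < m \<Longrightarrow> B i \<subseteq> B (Suc i)"
    and vals: "\<And>i. i \<le> m \<Longrightarrow> B i = P \<or> B i = Q" and "P \<subseteq> Q"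
  shows "card {i. i < m \<and> B i \<noteq> B (Suc i)} \<le> 1"
proof -
  have step: "B i = P \<and> B (Suc i) = Q \<and> P \<noteq> Q" if "i < m" "B i \<noteq> B (Suc i)" for i
    using vals[of i] vals[of "Suc i"] mono[of i] that \<open>P \<subseteq> Q\<close> by auto
  have "i = i'" if "i < m \<and> B i \<noteq> B (Suc i)" "i' < m \<and> B i' \<noteq> B (Suc i')" for i i'
  proof (rule ccontr)
    assume "i \<noteq> i'"
    then consider "i < i'" | "i' < i"
      by linarith
    then show False
    proof cases
      case 1
      then have "B (Suc i) \<subseteq> B i'"
        using chain_mono_le[of m B "Suc i" i', OF mono] that(2) by auto
      then show False
        using step[of i] step[of i'] that \<open>P \<subseteq> Q\<close> by auto
    next
      case 2
      then have "B (Suc i') \<subseteq> B i"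
        using chain_mono_le[of m B "Suc i'" i, OF mono] that(1) by auto
      then show False
        using step[of i] step[of i'] that \<open>P \<subseteq> Q\<close> by auto
    qed
  qed
  then show ?thesis
    using card_le_Suc0_iff_eq[of "{i. i < m \<and> B i \<noteq> B (Suc i)}"] by auto
qed

context left_mod
begin

lemma lsubmodule_lsum:
  assumes N: "lsubmodule R M N" and P: "lsubmodule R M P"
  shows "lsubmodule R M (lsum M N P)"
  unfolding lsubmodule_def
proof (intro conjI ballI)
  note N' = lsubmoduleD[OF N] and P' = lsubmoduleD[OF P]
  show "lsum M N P \<subseteq> carrier M"
    using N'(1) P'(1) unfolding lsum_def by (auto intro: M.add.m_closed)
  have "\<zero>\<^bsub>M\<^esub> = \<zero>\<^bsub>M\<^esub> \<oplus>\<^bsub>M\<^esub> \<zero>\<^bsub>M\<^esub>"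
    by simp
  then show "\<zero>\<^bsub>M\<^esub> \<in> lsum M N P"
    unfolding lsum_iff using N'(2) P'(2) by blast
next
  fix x y assume "x \<in> lsum M N P" "y \<in> lsum M N P"
  then obtain u v u' v' where uv: "u \<in> N" "v \<in> P" "x = u \<oplus>\<^bsub>M\<^esub> v"
    and uv': "u' \<in> N" "v' \<in> P" "y = u' \<oplus>\<^bsub>M\<^esub> v'"
    unfolding lsum_iff by blast
  have "u \<in> carrier M" "v \<in> carrier M" "u' \<in> carrier M" "v' \<in> carrier M"
    using uv uv' lsubmoduleD(1)[OF N] lsubmoduleD(1)[OF P] by auto
  then have "x \<oplus>\<^bsub>M\<^esub> y = (u \<oplus>\<^bsub>M\<^esub> u') \<oplus>\<^bsub>M\<^esub> (v \<oplus>\<^bsub>M\<^esub> v')"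
    using uv uv' by (simp add: M.a_ac)
  then show "x \<oplus>\<^bsub>M\<^esub> y \<in> lsum M N P"
    unfolding lsum_iff using lsubmoduleD(3)[OF N uv(1) uv'(1)] lsubmoduleD(3)[OF P uv(2) uv'(2)] by blast
next
  fix x assume "x \<in> lsum M N P"
  then obtain u v where uv: "u \<in> N" "v \<in> P" "x = u \<oplus>\<^bsub>M\<^esub> v"
    unfolding lsum_iff by blast
  have "u \<in> carrier M" "v \<in> carrier M"
    using uv lsubmoduleD(1)[OF N] lsubmoduleD(1)[OF P] by auto
  then have "\<ominus>\<^bsub>M\<^esub> x = (\<ominus>\<^bsub>M\<^esub> u) \<oplus>\<^bsub>M\<^esub> (\<ominus>\<^bsub>M\<^esub> v)"
    using uv by (simp add: M.minus_add)
  then show "\<ominus>\<^bsub>M\<^esub> x \<in> lsum M N P"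
    unfolding lsum_iff using lsubmoduleD(4)[OF N uv(1)] lsubmoduleD(4)[OF P uv(2)] by blast
next
  fix a x assume a: "a \<in> carrier R" and "x \<in> lsum M N P"
  then obtain u v where uv: "u \<in> N" "v \<in> P" "x = u \<oplus>\<^bsub>M\<^esub> v"
    unfolding lsum_iff by blast
  have "u \<in> carrier M" "v \<in> carrier M"
    using uv lsubmoduleD(1)[OF N] lsubmoduleD(1)[OF P] by auto
  then have "a \<odot>\<^bsub>M\<^esub> x = a \<odot>\<^bsub>M\<^esub> u \<oplus>\<^bsub>M\<^esub> a \<odot>\<^bsub>M\<^esub> v"
    using uv a by (simp add: smult_r_distr)
  then show "a \<odot>\<^bsub>M\<^esub> x \<in> lsum M N P"
    unfolding lsum_iff using lsubmoduleD(5)[OF N a uv(1)] lsubmoduleD(5)[OF P a uv(2)] by blast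
qed

lemma lsum_upper_left: "lsubmodule R M P \<Longrightarrow> N \<subseteq> carrier M \<Longrightarrow> N \<subseteq> lsum M N P"
  unfolding lsum_def using lsubmoduleD(2) M.r_zero by (smt (verit) mem_Collect_eq subset_iff)

lemma lsum_upper_right: "lsubmodule R M N \<Longrightarrow> P \<subseteq> carrier M \<Longrightarrow> P \<subseteq> lsum M N P"
  unfolding lsum_def using lsubmoduleD(2) M.l_zero by (smt (verit) mem_Collect_eq subset_iff)

lemma lsum_least: "lsubmodule R M Q \<Longrightarrow> N \<subseteq> Q \<Longrightarrow> P \<subseteq> Q \<Longrightarrow> lsum M N P \<subseteq> Q"
  unfolding lsum_def using lsubmoduleD(3) by blast

lemma lsubmodule_eq_by_Int_lsum:
  assumes N: "lsubmodule R M N" and N': "lsubmodule R M N'" and P: "lsubmodule R M P"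
    and "N \<subseteq> N'" and Int: "N \<inter> P = N' \<inter> P" and sum: "lsum M N P = lsum M N' P"
  shows "N = N'"
proof
  show "N' \<subseteq> N"
  proof
    fix x assume x: "x \<in> N'"
    then have "x \<in> lsum M N P"
      using sum lsum_upper_left[OF P lsubmoduleD(1)[OF N']] by blast
    then obtain u v where uv: "u \<in> N" "v \<in> P" "x = u \<oplus>\<^bsub>M\<^esub> v"
      unfolding lsum_iff by blast
    have "u \<in> carrier M" "v \<in> carrier M"
      using uv lsubmoduleD(1)[OF N] lsubmoduleD(1)[OF P] by auto
    then have "v = \<ominus>\<^bsub>M\<^esub> u \<oplus>\<^bsub>M\<^esub> x"
      using uv(3) by (simp add: M.a_assoc[symmetric] M.l_neg)
    then have "v \<in> N' \<inter> P"
      using lsubmoduleD(3,4)[OF N'] x \<open>N \<subseteq> N'\<close> uv(1,2) by blast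
    then have "v \<in> N"
      using Int by blast
    then show "x \<in> N"
      using lsubmoduleD(3)[OF N uv(1)] uv(3) by simp
  qed
qed fact

lemma composition_series_of_generators:
  assumes N: "composition_series_of R M N k P"
  obtains y where "y ` {1..k} \<subseteq> carrier M" "lspan R M (y ` {1..k}) = P"
proof -
  have sub: "\<And>i. i \<le> k \<Longrightarrow> lsubmodule R M (N i)" and N0: "N 0 = {\<zero>\<^bsub>M\<^esub>}" and Nk: "N k = P"
    and step: "\<And>i. i < k \<Longrightarrow> N i \<subset> N (Suc i) \<and> \<not> (\<exists>L. lsubmodule R M L \<and> N i \<subset> L \<and> L \<subset> N (Suc i))"
    using N unfolding composition_series_of_def by blast+
  define y where "y i = (SOME x. x \<in> N i \<and> x \<notin> N (i - 1))" for i
  have y: "y (Suc i) \<in> N (Suc i) \<and> y (Suc i) \<notin> N i" if "i < k" for i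
  proof -
    have "\<exists>x. x \<in> N (Suc i) \<and> x \<notin> N i"
      using step[OF that] by auto
    then show ?thesis
      unfolding y_def diff_Suc_1 by (rule someI_ex)
  qed
  have yM: "y j \<in> carrier M" if "j \<in> {1..k}" for j
    using that y[of "j - 1"] lsubmoduleD(1)[OF sub[of j]] by (cases j) auto
  have "lspan R M (y ` {1..i}) = N i" if "i \<le> k" for i
    using that
  proof (induction i)
    case 0
    then show ?case
      using N0 lspan_empty by simp
  next
    case (Suc i)
    let ?Y = "insert (y (Suc i)) (y ` {1..i})"
    have ik: "i < k"
      using Suc.prems by simp
    have YM: "?Y \<subseteq> carrier M"
      using yM ik by auto
    have IH: "lspan R M (y ` {1..i}) = N i"
      using Suc ik by simp
    have "?Y \<subseteq> N (Suc i)"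
      using y[OF ik] step[OF ik] IH lspan_superset[of "y ` {1..i}"] by blast
    then have "lspan R M ?Y \<subseteq> N (Suc i)"
      using lspan_least sub ik by simp
    moreover have "N i \<subset> lspan R M ?Y"
      using IH lspan_mono[OF YM, of "y ` {1..i}"] lspan_superset[of ?Y] y[OF ik] by blast
    ultimately have "lspan R M ?Y = N (Suc i)"
      using step[OF ik] lspan_lsubmodule[OF YM] by blast
    then show ?case
      by (simp add: atLeastAtMostSuc_conv)
  qed
  then show thesis
    using that yM Nk by blast
qed

end

context semisimple_local
begin

lemma composition_series_of_lspan:
  "set zs \<subseteq> carrier M \<Longrightarrow> \<exists>N k. composition_series_of R M N k (lspan R M (set zs))"
proof (induction zs)
  case Nil
  have "composition_series_of R M (\<lambda>_. {\<zero>\<^bsub>M\<^esub>}) 0 (lspan R M (set []))"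
    unfolding composition_series_of_def using lsubmodule_zero lspan_empty by simp
  then show ?case
    by blast
next
  case (Cons z zs)
  have S: "set zs \<subseteq> carrier M" and z: "z \<in> carrier M"
    using Cons.prems by auto
  let ?P = "lspan R M (set zs)"
  let ?P' = "lspan R M (insert z (set zs))"
  obtain N k where N: "composition_series_of R M N k ?P"
    using Cons.IH[OF S] by blast
  show ?case
  proof (cases "?P' = ?P")
    case True
    then show ?thesis
      using N by auto
  next
    case False
    have zS: "insert z (set zs) \<subseteq> carrier M"
      using S z by blast
    have "?P \<subset> ?P'"
      using lspan_mono[OF zS] False by blast
    moreover have "\<not> (\<exists>L. lsubmodule R M L \<and> ?P \<subset> L \<and> L \<subset> ?P')"
      using lspan_insert_no_intermediate[OF S z] by blast
    ultimately have "composition_series_of R M (N(Suc k := ?P')) (Suc k) ?P'"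
      using N lspan_lsubmodule[OF zS]
      unfolding composition_series_of_def by (auto simp: less_Suc_eq le_Suc_eq)
    then show ?thesis
      by auto
  qed
qed

lemma lsum_chain_changes_le_one:
  assumes S: "S \<subseteq> carrier M" and z: "z \<in> carrier M"
    and sub: "\<And>i. i \<le> m \<Longrightarrow> lsubmodule R M (N i)" and mono: "\<And>i. i < m \<Longrightarrow> N i \<subseteq> N (Suc i)"
    and upper: "\<And>i. i \<le> m \<Longrightarrow> N i \<subseteq> lspan R M (insert z S)"
  shows "card {i. i < m \<and> lsum M (N i) (lspan R M S) \<noteq> lsum M (N (Suc i)) (lspan R M S)} \<le> 1"
proof (rule chain_two_values_changes_le_one)
  have zS: "insert z S \<subseteq> carrier M"
    using S z by blast
  note P = lspan_lsubmodule[OF S] and P' = lspan_lsubmodule[OF zS]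
  show PP': "lspan R M S \<subseteq> lspan R M (insert z S)"
    using lspan_mono[OF zS] by blast
  show "lsum M (N i) (lspan R M S) \<subseteq> lsum M (N (Suc i)) (lspan R M S)" if "i < m" for i
    using lsum_mono[OF mono[OF that]] .
  show "lsum M (N i) (lspan R M S) = lspan R M S \<or> lsum M (N i) (lspan R M S) = lspan R M (insert z S)"
    if "i \<le> m" for i
    using lspan_insert_no_intermediate[OF S z lsubmodule_lsum[OF sub[OF that] P]
        lsum_upper_right[OF sub[OF that] lsubmoduleD(1)[OF P]] lsum_least[OF P' upper[OF that] PP']] .
qed

text \<open>Intersecting with, and adding, the span of the tail of \<open>zs\<close> splits the chain into one bounded
  by induction and one with at most one proper step; by the modular law a proper step of the
  chain is a proper step of one of them.\<close>

lemma chain_changes_le_length: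
  "set zs \<subseteq> carrier M \<Longrightarrow> (\<And>i. i \<le> m \<Longrightarrow> lsubmodule R M (N i)) \<Longrightarrow>
   (\<And>i. i < m \<Longrightarrow> N i \<subseteq> N (Suc i)) \<Longrightarrow> N m \<subseteq> lspan R M (set zs) \<Longrightarrow>
   card {i. i < m \<and> N i \<noteq> N (Suc i)} \<le> length zs"
proof (induction zs arbitrary: N)
  case Nil
  have "N i = {\<zero>\<^bsub>M\<^esub>}" if "i \<le> m" for i
    using chain_mono_le[of m N i m] Nil.prems lsubmoduleD(2)[OF Nil.prems(2)[OF that]] that
    by (auto simp: lspan_empty)
  then have "{i. i < m \<and> N i \<noteq> N (Suc i)} = {}"
    by fastforce
  then show ?case
    by simp
next
  case (Cons z zs)
  have S: "set zs \<subseteq> carrier M" and z: "z \<in> carrier M"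
    using Cons.prems by auto
  let ?P = "lspan R M (set zs)"
  let ?P' = "lspan R M (insert z (set zs))"
  have P: "lsubmodule R M ?P"
    using lspan_lsubmodule S by blast
  note sub = Cons.prems(2) and mono = Cons.prems(3)
  define A where "A i = N i \<inter> ?P" for i
  define B where "B i = lsum M (N i) ?P" for i
  have A_steps: "card {i. i < m \<and> A i \<noteq> A (Suc i)} \<le> length zs"
    using Cons.IH[OF S, of A] lsubmodule_Int[OF sub P] mono unfolding A_def by blast
  have "N i \<subseteq> ?P'" if "i \<le> m" for i
    using chain_mono_le[of m N i m] mono that Cons.prems(4) by auto
  then have B_steps: "card {i. i < m \<and> B i \<noteq> B (Suc i)} \<le> 1"
    unfolding B_def using lsum_chain_changes_le_one[of "set zs" z m N, OF S z sub mono] by blast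
  have "{i. i < m \<and> N i \<noteq> N (Suc i)} \<subseteq>
      {i. i < m \<and> A i \<noteq> A (Suc i)} \<union> {i. i < m \<and> B i \<noteq> B (Suc i)}"
  proof
    fix i assume "i \<in> {i. i < m \<and> N i \<noteq> N (Suc i)}"
    then have i: "i < m" "N i \<noteq> N (Suc i)"
      by auto
    then have "A i \<noteq> A (Suc i) \<or> B i \<noteq> B (Suc i)"
      using lsubmodule_eq_by_Int_lsum[OF sub[of i] sub[of "Suc i"] P mono[OF i(1)]]
      unfolding A_def B_def by auto
    then show "i \<in> {i. i < m \<and> A i \<noteq> A (Suc i)} \<union> {i. i < m \<and> B i \<noteq> B (Suc i)}"
      using i(1) by blast
  qed
  then have "card {i. i < m \<and> N i \<noteq> N (Suc i)} \<le>
      card ({i. i < m \<and> A i \<noteq> A (Suc i)} \<union> {i. i < m \<and> B i \<noteq> B (Suc i)})"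
    by (rule card_mono[rotated]) simp
  also have "\<dots> \<le> card {i. i < m \<and> A i \<noteq> A (Suc i)} + card {i. i < m \<and> B i \<noteq> B (Suc i)}"
    by (rule card_Un_le)
  finally show ?case
    using A_steps B_steps by simp
qed

lemma composition_series_length_le:
  assumes N: "composition_series_of R M N k (carrier M)" and N': "composition_series_of R M N' k' (carrier M)"
  shows "k' \<le> k"
proof -
  obtain y where y: "y ` {1..k} \<subseteq> carrier M" "lspan R M (y ` {1..k}) = carrier M"
    using composition_series_of_generators[OF N] by blast
  have sub: "\<And>i. i \<le> k' \<Longrightarrow> lsubmodule R M (N' i)" and top: "N' k' = carrier M"
    and step: "\<And>i. i < k' \<Longrightarrow> N' i \<subset> N' (Suc i)"
    using N' unfolding composition_series_of_def by blast+
  let ?zs = "map y [1..<Suc k]"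
  have zs: "set ?zs = y ` {1..k}"
    by (simp only: set_map set_upt atLeastLessThanSuc_atLeastAtMost)
  have "card {i. i < k' \<and> N' i \<noteq> N' (Suc i)} \<le> length ?zs"
  proof (rule chain_changes_le_length[OF _ sub])
    show "set ?zs \<subseteq> carrier M" "N' k' \<subseteq> lspan R M (set ?zs)"
      using zs y top by simp_all
    show "N' i \<subseteq> N' (Suc i)" if "i < k'" for i
      using step[OF that] by blast
  qed
  moreover have "{i. i < k' \<and> N' i \<noteq> N' (Suc i)} = {..<k'}"
    using step by auto
  ultimately show ?thesis
    by (simp del: upt_Suc)
qed

lemma comp_length_eqI:
  assumes "composition_series_of R M N k (carrier M)"
  shows "comp_length R M = k"
  unfolding comp_length_def composition_series_iff
  using assms composition_series_length_le by (blast intro: the_equality le_antisym)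

lemma generating_family_comp_length:
  assumes "finitely_generated R M"
  obtains y where "generates R M (y ` {1..comp_length R M})"
proof -
  obtain S where S: "finite S" "S \<subseteq> carrier M" "lspan R M S = carrier M"
    using assms unfolding finitely_generated_def generates_def by blast
  obtain zs where zs: "set zs = S"
    using finite_list[OF S(1)] by blast
  then obtain N k where "composition_series_of R M N k (lspan R M (set zs))"
    using composition_series_of_lspan S(2) by blast
  then have N: "composition_series_of R M N k (carrier M)"
    using zs S(3) by simp
  obtain y where "y ` {1..k} \<subseteq> carrier M" "lspan R M (y ` {1..k}) = carrier M"
    using composition_series_of_generators[OF N] by blast
  then have "generates R M (y ` {1..comp_length R M})"
    unfolding comp_length_eqI[OF N] generates_def by blast
  then show thesis
    by (rule that)
qed

end

section \<open>Endomorphisms with a prescribed value\<close>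

context left_mod
begin

lemma direct_sum_eq_imp_eq:
  assumes Q: "lsubmodule R M Q" and Q': "lsubmodule R M Q'" and QQ': "Q \<inter> Q' = {\<zero>\<^bsub>M\<^esub>}"
    and a: "a \<in> Q" "a' \<in> Q" and q: "q \<in> Q'" "q' \<in> Q'"
    and eq: "a \<oplus>\<^bsub>M\<^esub> q = a' \<oplus>\<^bsub>M\<^esub> q'"
  shows "a = a'"
proof -
  have M: "a \<in> carrier M" "a' \<in> carrier M" "q \<in> carrier M" "q' \<in> carrier M"
    using a q lsubmoduleD(1)[OF Q] lsubmoduleD(1)[OF Q'] by auto
  have diff: "a \<ominus>\<^bsub>M\<^esub> a' = q' \<ominus>\<^bsub>M\<^esub> q"
    using add_eq_imp_minus_eq[OF M eq] .
  have "a \<ominus>\<^bsub>M\<^esub> a' \<in> Q" "q' \<ominus>\<^bsub>M\<^esub> q \<in> Q'"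
    using lsubmodule_minus[OF Q a] lsubmodule_minus[OF Q' q(2) q(1)] .
  then have "a \<ominus>\<^bsub>M\<^esub> a' \<in> Q \<inter> Q'"
    unfolding diff by simp
  then have "a \<oplus>\<^bsub>M\<^esub> \<ominus>\<^bsub>M\<^esub> a' = \<zero>\<^bsub>M\<^esub>"
    unfolding QQ' M.minus_eq by simp
  then show ?thesis
    using M by (metis M.minus_equality M.minus_minus M.a_comm M.a_inv_closed)
qed

definition coeff_along :: "'b \<Rightarrow> 'b set \<Rightarrow> 'b set \<Rightarrow> 'b \<Rightarrow> 'a \<Rightarrow> bool"
  where "coeff_along w N Q z c \<longleftrightarrow>
    c \<in> carrier R \<and> (\<exists>u\<in>N. \<exists>q\<in>Q. z = (c \<odot>\<^bsub>M\<^esub> w \<oplus>\<^bsub>M\<^esub> u) \<oplus>\<^bsub>M\<^esub> q)"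

lemma coeff_along_add:
  assumes N: "lsubmodule R M N" and Q: "lsubmodule R M Q" and w: "w \<in> carrier M"
    and c: "coeff_along w N Q z c" and c': "coeff_along w N Q z' c'"
  shows "coeff_along w N Q (z \<oplus>\<^bsub>M\<^esub> z') (c \<oplus>\<^bsub>R\<^esub> c')"
proof -
  obtain u q where uq: "c \<in> carrier R" "u \<in> N" "q \<in> Q" "z = (c \<odot>\<^bsub>M\<^esub> w \<oplus>\<^bsub>M\<^esub> u) \<oplus>\<^bsub>M\<^esub> q"
    using c unfolding coeff_along_def by blast
  obtain u' q' where uq': "c' \<in> carrier R" "u' \<in> N" "q' \<in> Q" "z' = (c' \<odot>\<^bsub>M\<^esub> w \<oplus>\<^bsub>M\<^esub> u') \<oplus>\<^bsub>M\<^esub> q'"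
    using c' unfolding coeff_along_def by blast
  have "u \<in> carrier M" "u' \<in> carrier M" "q \<in> carrier M" "q' \<in> carrier M"
    using uq uq' lsubmoduleD(1)[OF N] lsubmoduleD(1)[OF Q] by auto
  then have "z \<oplus>\<^bsub>M\<^esub> z' = ((c \<oplus>\<^bsub>R\<^esub> c') \<odot>\<^bsub>M\<^esub> w \<oplus>\<^bsub>M\<^esub> (u \<oplus>\<^bsub>M\<^esub> u')) \<oplus>\<^bsub>M\<^esub> (q \<oplus>\<^bsub>M\<^esub> q')"
    using uq uq' w by (simp add: smult_l_distr M.a_ac)
  moreover have "u \<oplus>\<^bsub>M\<^esub> u' \<in> N" "q \<oplus>\<^bsub>M\<^esub> q' \<in> Q" "c \<oplus>\<^bsub>R\<^esub> c' \<in> carrier R"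
    using lsubmoduleD(3)[OF N uq(2) uq'(2)] lsubmoduleD(3)[OF Q uq(3) uq'(3)] uq(1) uq'(1)
    by simp_all
  ultimately show ?thesis
    unfolding coeff_along_def by blast
qed

lemma coeff_along_smult:
  assumes N: "lsubmodule R M N" and Q: "lsubmodule R M Q" and w: "w \<in> carrier M"
    and c: "coeff_along w N Q z c" and a: "a \<in> carrier R"
  shows "coeff_along w N Q (a \<odot>\<^bsub>M\<^esub> z) (a \<otimes>\<^bsub>R\<^esub> c)"
proof -
  obtain u q where uq: "c \<in> carrier R" "u \<in> N" "q \<in> Q" "z = (c \<odot>\<^bsub>M\<^esub> w \<oplus>\<^bsub>M\<^esub> u) \<oplus>\<^bsub>M\<^esub> q"
    using c unfolding coeff_along_def by blast
  have "u \<in> carrier M" "q \<in> carrier M"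
    using uq lsubmoduleD(1)[OF N] lsubmoduleD(1)[OF Q] by auto
  then have "a \<odot>\<^bsub>M\<^esub> z = ((a \<otimes>\<^bsub>R\<^esub> c) \<odot>\<^bsub>M\<^esub> w \<oplus>\<^bsub>M\<^esub> a \<odot>\<^bsub>M\<^esub> u) \<oplus>\<^bsub>M\<^esub> a \<odot>\<^bsub>M\<^esub> q"
    using uq w a by (simp add: smult_r_distr smult_assoc1)
  moreover have "a \<odot>\<^bsub>M\<^esub> u \<in> N" "a \<odot>\<^bsub>M\<^esub> q \<in> Q" "a \<otimes>\<^bsub>R\<^esub> c \<in> carrier R"
    using lsubmoduleD(5)[OF N a uq(2)] lsubmoduleD(5)[OF Q a uq(3)] uq(1) a by simp_all
  ultimately show ?thesis
    unfolding coeff_along_def by blast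
qed

lemma coeff_along_diff_in_jacobson:
  assumes N: "lsubmodule R M N" and w: "w \<in> carrier M"
    and rad: "\<And>r. r \<in> carrier R \<Longrightarrow> r \<odot>\<^bsub>M\<^esub> w \<in> N \<Longrightarrow> r \<in> jacobson R"
    and Q: "lsubmodule R M Q" "lspan R M (insert w N) \<inter> Q = {\<zero>\<^bsub>M\<^esub>}"
    and c: "coeff_along w N Q z c" and c': "coeff_along w N Q z c'"
  shows "c \<ominus>\<^bsub>R\<^esub> c' \<in> jacobson R"
proof (rule rad)
  obtain u q where uq: "c \<in> carrier R" "u \<in> N" "q \<in> Q" "z = (c \<odot>\<^bsub>M\<^esub> w \<oplus>\<^bsub>M\<^esub> u) \<oplus>\<^bsub>M\<^esub> q"
    using c unfolding coeff_along_def by blast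
  obtain u' q' where uq': "c' \<in> carrier R" "u' \<in> N" "q' \<in> Q" "z = (c' \<odot>\<^bsub>M\<^esub> w \<oplus>\<^bsub>M\<^esub> u') \<oplus>\<^bsub>M\<^esub> q'"
    using c' unfolding coeff_along_def by blast
  have wN: "insert w N \<subseteq> carrier M"
    using w lsubmoduleD(1)[OF N] by blast
  have uM: "u \<in> carrier M" "u' \<in> carrier M"
    using uq(2) uq'(2) lsubmoduleD(1)[OF N] by blast+
  have "c \<odot>\<^bsub>M\<^esub> w \<oplus>\<^bsub>M\<^esub> u \<in> lspan R M (insert w N)" "c' \<odot>\<^bsub>M\<^esub> w \<oplus>\<^bsub>M\<^esub> u' \<in> lspan R M (insert w N)"
    unfolding lspan_insert_lsubmodule[OF N w] using uq uq' by blast+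
  then have "c \<odot>\<^bsub>M\<^esub> w \<oplus>\<^bsub>M\<^esub> u = c' \<odot>\<^bsub>M\<^esub> w \<oplus>\<^bsub>M\<^esub> u'"
    using direct_sum_eq_imp_eq[OF lspan_lsubmodule[OF wN] Q _ _ uq(3) uq'(3)] uq(4) uq'(4) by simp
  then have "(c \<ominus>\<^bsub>R\<^esub> c') \<odot>\<^bsub>M\<^esub> w = u' \<ominus>\<^bsub>M\<^esub> u"
    using add_eq_imp_minus_eq[of "c \<odot>\<^bsub>M\<^esub> w" "c' \<odot>\<^bsub>M\<^esub> w" u u'] uq(1) uq'(1) w uM
    by (simp add: smult_minus_distr)
  then show "(c \<ominus>\<^bsub>R\<^esub> c') \<odot>\<^bsub>M\<^esub> w \<in> N"
    using lsubmodule_minus[OF N uq'(2) uq(2)] by simp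
  show "c \<ominus>\<^bsub>R\<^esub> c' \<in> carrier R"
    using uq(1) uq'(1) by simp
qed

lemma End_coeff_along:
  assumes N: "lsubmodule R M N" and Q: "lsubmodule R M Q" and w: "w \<in> carrier M"
    and x: "x \<in> carrier M" and ex: "\<And>z. z \<in> carrier M \<Longrightarrow> \<exists>c. coeff_along w N Q z c"
    and unique: "\<And>z c c'. coeff_along w N Q z c \<Longrightarrow> coeff_along w N Q z c' \<Longrightarrow>
      c \<odot>\<^bsub>M\<^esub> x = c' \<odot>\<^bsub>M\<^esub> x"
  shows "(\<lambda>z. (SOME c. coeff_along w N Q z c) \<odot>\<^bsub>M\<^esub> x) \<in> End R M"
    (is "?\<theta> \<in> End R M")
proof -
  have \<theta>: "?\<theta> z = c \<odot>\<^bsub>M\<^esub> x" if "coeff_along w N Q z c" for z c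
    using unique[OF someI[of "coeff_along w N Q z", OF that] that] .
  have carrier: "c \<in> carrier R" if "coeff_along w N Q z c" for z c
    using that unfolding coeff_along_def by blast
  show ?thesis
    unfolding End_def
  proof (intro CollectI conjI ballI funcsetI)
    fix z assume "z \<in> carrier M"
    then obtain c where "coeff_along w N Q z c"
      using ex by blast
    then show "?\<theta> z \<in> carrier M"
      using \<theta> carrier x by simp
  next
    fix z z' assume "z \<in> carrier M" "z' \<in> carrier M"
    then obtain c c' where c: "coeff_along w N Q z c" "coeff_along w N Q z' c'"
      using ex by blast
    then show "?\<theta> (z \<oplus>\<^bsub>M\<^esub> z') = ?\<theta> z \<oplus>\<^bsub>M\<^esub> ?\<theta> z'"
      using \<theta>[OF coeff_along_add[OF N Q w c]] \<theta>[OF c(1)] \<theta>[OF c(2)] carrier x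
      by (simp add: smult_l_distr)
  next
    fix a z assume a: "a \<in> carrier R" and "z \<in> carrier M"
    then obtain c where c: "coeff_along w N Q z c"
      using ex by blast
    then show "?\<theta> (a \<odot>\<^bsub>M\<^esub> z) = a \<odot>\<^bsub>M\<^esub> ?\<theta> z"
      using \<theta>[OF coeff_along_smult[OF N Q w c a]] \<theta>[OF c] carrier a x
      by (simp add: smult_assoc1)
  qed
qed

end

context semisimple_local
begin

text \<open>Project along a complement of \<open>Rw + N\<close> and send the coefficient of \<open>w\<close> to the same multiple
  of \<open>x\<close>; this is well defined because the radical annihilates \<open>M\<close>.\<close>

lemma End_vanishing_on_lsubmodule:
  assumes N: "lsubmodule R M N" and w: "w \<in> carrier M"
    and rad: "\<And>r. r \<in> carrier R \<Longrightarrow> r \<odot>\<^bsub>M\<^esub> w \<in> N \<Longrightarrow> r \<in> jacobson R"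
    and x: "x \<in> carrier M"
  obtains \<theta> where "\<theta> \<in> End R M" "\<And>u. u \<in> N \<Longrightarrow> \<theta> u = \<zero>\<^bsub>M\<^esub>" "\<theta> w = x"
    "\<And>z. z \<in> carrier M \<Longrightarrow> \<exists>r\<in>carrier R. \<theta> z = r \<odot>\<^bsub>M\<^esub> x"
proof -
  have wN: "insert w N \<subseteq> carrier M"
    using w lsubmoduleD(1)[OF N] by blast
  obtain Q where Q: "lsubmodule R M Q" "lspan R M (insert w N) \<inter> Q = {\<zero>\<^bsub>M\<^esub>}"
    and decomp: "\<And>z. z \<in> carrier M \<Longrightarrow> \<exists>v\<in>lspan R M (insert w N). \<exists>q\<in>Q. z = v \<oplus>\<^bsub>M\<^esub> q"
    using semisimple_complement[OF lspan_lsubmodule[OF wN]] by blast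
  let ?coeff = "coeff_along w N Q"
  have coeff_ex: "\<exists>c. ?coeff z c" if "z \<in> carrier M" for z
    using decomp[OF that] unfolding coeff_along_def lspan_insert_lsubmodule[OF N w] by blast
  have coeff_carrier: "c \<in> carrier R" if "?coeff z c" for z c
    using that unfolding coeff_along_def by blast
  have coeff_unique: "c \<odot>\<^bsub>M\<^esub> x = c' \<odot>\<^bsub>M\<^esub> x" if "?coeff z c" "?coeff z c'" for z c c'
  proof -
    have "(c \<ominus>\<^bsub>R\<^esub> c') \<odot>\<^bsub>M\<^esub> x = \<zero>\<^bsub>M\<^esub>"
      using jacobson_smult_eq_zero[OF coeff_along_diff_in_jacobson[OF N w rad Q that] x] .
    then have "c \<odot>\<^bsub>M\<^esub> x \<oplus>\<^bsub>M\<^esub> \<ominus>\<^bsub>M\<^esub> (c' \<odot>\<^bsub>M\<^esub> x) = \<zero>\<^bsub>M\<^esub>"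
      using smult_minus_distr[of c c' x] coeff_carrier that x by (simp add: M.minus_eq)
    then show ?thesis
      using x coeff_carrier[OF that(1)] coeff_carrier[OF that(2)]
      by (metis M.minus_equality M.minus_minus M.a_comm M.a_inv_closed smult_closed)
  qed
  define \<theta> where "\<theta> z = (SOME c. ?coeff z c) \<odot>\<^bsub>M\<^esub> x" for z
  have \<theta>: "\<theta> z = c \<odot>\<^bsub>M\<^esub> x" if "?coeff z c" for z c
    unfolding \<theta>_def using coeff_unique[OF someI[of "?coeff z", OF that] that] .
  have "\<theta> \<in> End R M"
    unfolding \<theta>_def[abs_def] using End_coeff_along[OF N Q(1) w x coeff_ex coeff_unique] .
  moreover have "\<theta> u = \<zero>\<^bsub>M\<^esub>" if "u \<in> N" for u
  proof -
    have "u = (\<zero>\<^bsub>R\<^esub> \<odot>\<^bsub>M\<^esub> w \<oplus>\<^bsub>M\<^esub> u) \<oplus>\<^bsub>M\<^esub> \<zero>\<^bsub>M\<^esub>"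
      using that lsubmoduleD(1)[OF N] w by auto
    then have "?coeff u \<zero>\<^bsub>R\<^esub>"
      unfolding coeff_along_def using that lsubmoduleD(2)[OF Q(1)] R.zero_closed by blast
    then show ?thesis
      using \<theta> x by simp
  qed
  moreover have "\<theta> w = x"
  proof -
    have "w = (\<one>\<^bsub>R\<^esub> \<odot>\<^bsub>M\<^esub> w \<oplus>\<^bsub>M\<^esub> \<zero>\<^bsub>M\<^esub>) \<oplus>\<^bsub>M\<^esub> \<zero>\<^bsub>M\<^esub>"
      using w by simp
    then have "?coeff w \<one>\<^bsub>R\<^esub>"
      unfolding coeff_along_def using lsubmoduleD(2)[OF N] lsubmoduleD(2)[OF Q(1)] R.one_closed by blast
    then show ?thesis
      using \<theta> x by simp
  qed
  moreover have "\<exists>r\<in>carrier R. \<theta> z = r \<odot>\<^bsub>M\<^esub> x" if "z \<in> carrier M" for z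
    using coeff_ex[OF that] \<theta> coeff_carrier by blast
  ultimately show thesis
    using that by blast
qed

end

section \<open>The centralizer of a nilpotent endomorphism\<close>

context left_mod
begin

lemma polynomial_on_generators_imp_centralizer_subset:
  assumes \<phi>: "\<phi> \<in> End R M" and \<sigma>: "\<sigma> \<in> End R M" and gen: "generates R M Y"
    and A: "finite A" and a: "\<And>i. i \<in> A \<Longrightarrow> a i \<in> carrier R"
    and poly: "\<And>y \<psi>. y \<in> Y \<Longrightarrow> \<psi> \<in> centralizer R M \<phi> \<Longrightarrow>
      (\<Oplus>\<^bsub>M\<^esub>i\<in>A. a i \<odot>\<^bsub>M\<^esub> (\<phi> ^^ h i) (\<psi> y)) = \<sigma> (\<psi> y)"
  shows "centralizer R M \<phi> \<subseteq> centralizer R M \<sigma>"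
proof
  fix \<psi> assume \<psi>: "\<psi> \<in> centralizer R M \<phi>"
  then have \<psi>_End: "\<psi> \<in> End R M" and comm: "\<And>z. z \<in> carrier M \<Longrightarrow> \<psi> (\<phi> z) = \<phi> (\<psi> z)"
    unfolding centralizer_iff by auto
  have Y: "Y \<subseteq> carrier M" "lspan R M Y = carrier M"
    using gen unfolding generates_def by auto
  have id: "(\<lambda>x. x) \<in> centralizer R M \<phi>"
    unfolding centralizer_iff using End_id by simp
  have "\<psi> (\<sigma> y) = \<sigma> (\<psi> y)" if y: "y \<in> Y" for y
  proof -
    have "\<psi> (\<sigma> y) = \<psi> (\<Oplus>\<^bsub>M\<^esub>i\<in>A. a i \<odot>\<^bsub>M\<^esub> (\<phi> ^^ h i) y)"
      using poly[OF y id] by simp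
    also have "\<dots> = (\<Oplus>\<^bsub>M\<^esub>i\<in>A. a i \<odot>\<^bsub>M\<^esub> (\<phi> ^^ h i) (\<psi> y))"
      using End_finsum_funpow_commute[of \<psi> \<phi> A a y h] \<psi>_End \<phi> comm A a Y(1) y by blast
    also have "\<dots> = \<sigma> (\<psi> y)"
      using poly[OF y \<psi>] .
    finally show ?thesis .
  qed
  then have "\<psi> (\<sigma> x) = \<sigma> (\<psi> x)" if "x \<in> carrier M" for x
    using End_eq_on_lspan[OF End_comp[OF \<psi>_End \<sigma>] End_comp[OF \<sigma> \<psi>_End] Y(2) _ that] by blast
  then show "\<psi> \<in> centralizer R M \<sigma>"
    unfolding centralizer_iff using \<psi>_End by blast
qed

end

locale nilpotent_endomorphism = semisimple_local +
  fixes \<phi> and n :: nat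
  assumes End_\<phi>: "\<phi> \<in> End R M" and nilpotent: "nilpotent_index M \<phi> n"
begin

lemma funpow_End: "\<phi> ^^ k \<in> End R M"
  using End_funpow[OF End_\<phi>] .

lemma funpow_closed: "x \<in> carrier M \<Longrightarrow> (\<phi> ^^ k) x \<in> carrier M"
  using EndD(1)[OF funpow_End] .

lemma index_pos: "0 < n"
  using nilpotent unfolding nilpotent_index_def by (cases n) auto

lemma funpow_eq_zero:
  assumes x: "x \<in> carrier M" and k: "n \<le> k"
  shows "(\<phi> ^^ k) x = \<zero>\<^bsub>M\<^esub>"
proof -
  have "(\<phi> ^^ k) x = (\<phi> ^^ (k - n)) ((\<phi> ^^ n) x)"
    using k by (metis funpow_add le_add_diff_inverse2 o_apply)
  then show ?thesis
    using nilpotent x End_zero[OF funpow_End] unfolding nilpotent_index_def by simp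
qed

text \<open>The map \<open>\<Sum>\<^sub>i \<phi>\<^sup>i \<theta> \<phi>\<^bsup>n-1-i\<^esup>\<close> commutes with \<open>\<phi>\<close> for every \<open>\<theta>\<close>: composing with \<open>\<phi>\<close> on either
  side shifts the sum, and the two boundary terms vanish because \<open>\<phi>\<^sup>n = 0\<close>.\<close>

definition sandwich
  where "sandwich \<theta> z = (\<Oplus>\<^bsub>M\<^esub>i\<in>{..n - 1}. (\<phi> ^^ i) (\<theta> ((\<phi> ^^ (n - 1 - i)) z)))"

lemma sandwich_End:
  assumes "\<theta> \<in> End R M"
  shows "sandwich \<theta> \<in> End R M"
  unfolding sandwich_def
  using End_finsum_maps[of "{..n - 1}" "\<lambda>i z. (\<phi> ^^ i) (\<theta> ((\<phi> ^^ (n - 1 - i)) z))"]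
    End_comp[OF funpow_End End_comp[OF assms funpow_End]] by simp

lemma sandwich_commute:
  assumes \<theta>: "\<theta> \<in> End R M" and z: "z \<in> carrier M"
  shows "sandwich \<theta> (\<phi> z) = \<phi> (sandwich \<theta> z)"
proof -
  obtain m where m: "n = Suc m"
    using index_pos by (cases n) auto
  define F where "F i = (\<phi> ^^ i) (\<theta> ((\<phi> ^^ (Suc m - i)) z))" for i
  have F: "F \<in> {..Suc m} \<rightarrow> carrier M"
    unfolding F_def using funpow_closed EndD(1)[OF \<theta>] z by blast
  have sum_closed: "(\<Oplus>\<^bsub>M\<^esub>i\<in>{..m}. F i) \<in> carrier M" "(\<Oplus>\<^bsub>M\<^esub>i\<in>{..m}. F (Suc i)) \<in> carrier M"
    using F by (auto intro!: M.finsum_closed)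
  have "F 0 = \<theta> ((\<phi> ^^ n) z)" "F (Suc m) = (\<phi> ^^ n) (\<theta> z)"
    unfolding F_def m by simp_all
  then have F_0: "F 0 = \<zero>\<^bsub>M\<^esub>" and F_top: "F (Suc m) = \<zero>\<^bsub>M\<^esub>"
    using funpow_eq_zero z EndD(1)[OF \<theta> z] End_zero[OF \<theta>] by simp_all
  have "sandwich \<theta> (\<phi> z) = (\<Oplus>\<^bsub>M\<^esub>i\<in>{..m}. F i)"
    unfolding sandwich_def F_def unfolding m using funpow_closed EndD(1)[OF \<theta>] EndD(1)[OF End_\<phi> z] z
    by (intro M.finsum_cong') (auto simp: funpow_swap1 Suc_diff_le)
  also have "\<dots> = (\<Oplus>\<^bsub>M\<^esub>i\<in>{..Suc m}. F i)"
    using M.finsum_Suc[OF F] F_top sum_closed by simp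
  also have "\<dots> = (\<Oplus>\<^bsub>M\<^esub>i\<in>{..m}. F (Suc i))"
    using M.finsum_Suc2[OF F] F_0 sum_closed by simp
  also have "\<dots> = \<phi> (sandwich \<theta> z)"
    unfolding sandwich_def F_def unfolding m
    using End_finsum[OF End_\<phi> finite_atMost, of "\<lambda>i. (\<phi> ^^ i) (\<theta> ((\<phi> ^^ (m - i)) z))"]
      funpow_closed EndD(1)[OF \<theta>] z by (simp add: Pi_iff)
  finally show ?thesis .
qed

lemma sandwich_eq_top:
  assumes \<theta>: "\<theta> \<in> End R M" and w: "w \<in> carrier M"
    and vanish: "\<And>k. k < n - 1 \<Longrightarrow> \<theta> ((\<phi> ^^ k) w) = \<zero>\<^bsub>M\<^esub>"
  shows "sandwich \<theta> w = \<theta> ((\<phi> ^^ (n - 1)) w)"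
proof -
  have "sandwich \<theta> w = (\<Oplus>\<^bsub>M\<^esub>i\<in>{..n - 1}. if 0 = i then \<theta> ((\<phi> ^^ (n - 1)) w) else \<zero>\<^bsub>M\<^esub>)"
    unfolding sandwich_def using funpow_closed EndD(1)[OF \<theta>] End_zero[OF funpow_End] vanish w
    by (intro M.finsum_cong') auto
  also have "\<dots> = \<theta> ((\<phi> ^^ (n - 1)) w)"
    using M.finsum_singleton[of 0 "{..n - 1}" "\<lambda>_. \<theta> ((\<phi> ^^ (n - 1)) w)"]
      funpow_closed EndD(1)[OF \<theta>] w by simp
  finally show ?thesis .
qed

lemma sandwich_centralizer: "\<theta> \<in> End R M \<Longrightarrow> sandwich \<theta> \<in> centralizer R M \<phi>"
  unfolding centralizer_iff using sandwich_End sandwich_commute by blast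

definition lower_orbit
  where "lower_orbit w t = {(\<phi> ^^ k) w | k. t \<le> k \<and> k < n - 1}"

lemma lower_orbit_subset_carrier: "w \<in> carrier M \<Longrightarrow> lower_orbit w t \<subseteq> carrier M"
  unfolding lower_orbit_def using funpow_closed by blast

lemma lower_orbit_insert:
  assumes "t < n - 1"
  shows "lower_orbit w t = insert ((\<phi> ^^ t) w) (lower_orbit w (Suc t))"
  unfolding lower_orbit_def using assms by (auto simp: le_eq_less_or_eq Suc_le_eq)

lemma funpow_lspan_lower_orbit_eq_zero:
  assumes w: "w \<in> carrier M" and u: "u \<in> lspan R M (lower_orbit w (Suc t))"
  shows "(\<phi> ^^ (n - 1 - t)) u = \<zero>\<^bsub>M\<^esub>"
proof -
  let ?g = "\<phi> ^^ (n - 1 - t)"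
  have "?g ` lower_orbit w (Suc t) \<subseteq> {\<zero>\<^bsub>M\<^esub>}"
  proof
    fix v assume "v \<in> ?g ` lower_orbit w (Suc t)"
    then obtain k where k: "Suc t \<le> k" "v = ?g ((\<phi> ^^ k) w)"
      unfolding lower_orbit_def by blast
    then have "v = (\<phi> ^^ (n - 1 - t + k)) w"
      by (simp add: funpow_add)
    then show "v \<in> {\<zero>\<^bsub>M\<^esub>}"
      using funpow_eq_zero[OF w] k(1) by simp
  qed
  then show ?thesis
    using End_image_lspan_subset[OF funpow_End lower_orbit_subset_carrier[OF w]] u lspan_zero_set by blast
qed

text \<open>Downward induction on \<open>t\<close>: if \<open>\<phi>\<^bsup>n-1\<^esup> w = c \<phi>\<^sup>t w + u\<close>, then either \<open>c\<close> lies in the radical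
  and kills \<open>\<phi>\<^sup>t w\<close>, or applying \<open>\<phi>\<^bsup>n-1-t\<^esup>\<close> gives \<open>0 = c \<phi>\<^bsup>n-1\<^esup> w\<close>, forcing \<open>c\<close> into the radical.\<close>

lemma top_notin_lspan_lower_orbit:
  assumes w: "w \<in> carrier M" and top: "(\<phi> ^^ (n - 1)) w \<noteq> \<zero>\<^bsub>M\<^esub>" and "t \<le> n - 1"
  shows "(\<phi> ^^ (n - 1)) w \<notin> lspan R M (lower_orbit w t)"
  using \<open>t \<le> n - 1\<close>
proof (induction t rule: inc_induct)
  case base
  have "lower_orbit w (n - 1) = {}"
    unfolding lower_orbit_def by auto
  then show ?case
    using top lspan_empty by simp
next
  case (step t)
  let ?top = "(\<phi> ^^ (n - 1)) w"
  have wt: "(\<phi> ^^ t) w \<in> carrier M" and top_M: "?top \<in> carrier M"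
    using funpow_closed w by blast+
  show ?case
  proof
    assume "?top \<in> lspan R M (lower_orbit w t)"
    then obtain c u where cu: "c \<in> carrier R" "u \<in> lspan R M (lower_orbit w (Suc t))"
      "?top = c \<odot>\<^bsub>M\<^esub> (\<phi> ^^ t) w \<oplus>\<^bsub>M\<^esub> u"
      unfolding lower_orbit_insert[OF step.hyps(2)] lspan_insert[OF lower_orbit_subset_carrier[OF w] wt] by blast
    have uM: "u \<in> carrier M"
      using cu(2) lspan_subset_carrier[OF lower_orbit_subset_carrier[OF w]] by blast
    show False
    proof (cases "c \<in> jacobson R")
      case True
      then have "?top = u"
        using cu(3) jacobson_smult_eq_zero wt uM by simp
      then show False
        using step.IH cu(2) by simp
    next
      case False
      let ?g = "\<phi> ^^ (n - 1 - t)"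
      have "?g ((\<phi> ^^ t) w) = (\<phi> ^^ (n - 1 - t + t)) w"
        "?g ?top = (\<phi> ^^ (n - 1 - t + (n - 1))) w"
        by (simp_all add: funpow_add)
      then have "?g ((\<phi> ^^ t) w) = ?top" "?g ?top = \<zero>\<^bsub>M\<^esub>"
        using step.hyps(2) funpow_eq_zero[OF w] by simp_all
      then have "c \<odot>\<^bsub>M\<^esub> ?top = \<zero>\<^bsub>M\<^esub>"
        using cu(3) EndD[OF funpow_End] funpow_lspan_lower_orbit_eq_zero[OF w cu(2)] wt uM cu(1) by simp
      then show False
        using smult_eq_zero_imp_jacobson[OF cu(1) top_M _ top] False by blast
    qed
  qed
qed

lemma smult_top_in_lspan_imp_jacobson:
  assumes w: "w \<in> carrier M" and top: "(\<phi> ^^ (n - 1)) w \<noteq> \<zero>\<^bsub>M\<^esub>"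
    and r: "r \<in> carrier R" and "r \<odot>\<^bsub>M\<^esub> (\<phi> ^^ (n - 1)) w \<in> lspan R M (lower_orbit w 0)"
  shows "r \<in> jacobson R"
proof (rule ccontr)
  assume "r \<notin> jacobson R"
  then obtain s where s: "s \<in> carrier R" "\<And>x. x \<in> carrier M \<Longrightarrow> s \<odot>\<^bsub>M\<^esub> (r \<odot>\<^bsub>M\<^esub> x) = x"
    using smult_left_inverse[OF r] by blast
  have "s \<odot>\<^bsub>M\<^esub> (r \<odot>\<^bsub>M\<^esub> (\<phi> ^^ (n - 1)) w) \<in> lspan R M (lower_orbit w 0)"
    using lsubmoduleD(5)[OF lspan_lsubmodule[OF lower_orbit_subset_carrier[OF w]] s(1)] assms(4) .
  then show False
    using s(2)[OF funpow_closed[OF w]] top_notin_lspan_lower_orbit[OF w top] by simp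
qed

lemma End_vanishing_on_lower_orbit:
  assumes w: "w \<in> carrier M" and top: "(\<phi> ^^ (n - 1)) w \<noteq> \<zero>\<^bsub>M\<^esub>" and x: "x \<in> carrier M"
  obtains \<theta> where "\<theta> \<in> End R M" "\<And>k. k < n - 1 \<Longrightarrow> \<theta> ((\<phi> ^^ k) w) = \<zero>\<^bsub>M\<^esub>"
    "\<theta> ((\<phi> ^^ (n - 1)) w) = x" "\<And>z. z \<in> carrier M \<Longrightarrow> \<exists>r\<in>carrier R. \<theta> z = r \<odot>\<^bsub>M\<^esub> x"
proof -
  let ?N = "lspan R M (lower_orbit w 0)"
  obtain \<theta> where \<theta>: "\<theta> \<in> End R M" "\<And>u. u \<in> ?N \<Longrightarrow> \<theta> u = \<zero>\<^bsub>M\<^esub>" "\<theta> ((\<phi> ^^ (n - 1)) w) = x"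
    "\<And>z. z \<in> carrier M \<Longrightarrow> \<exists>r\<in>carrier R. \<theta> z = r \<odot>\<^bsub>M\<^esub> x"
    using End_vanishing_on_lsubmodule[OF lspan_lsubmodule[OF lower_orbit_subset_carrier[OF w]]
        funpow_closed[OF w] smult_top_in_lspan_imp_jacobson[OF w top] x] by blast
  have orbit: "(\<phi> ^^ k) w \<in> ?N" if "k < n - 1" for k
  proof -
    have "(\<phi> ^^ k) w \<in> lower_orbit w 0"
      unfolding lower_orbit_def using that by blast
    then show ?thesis
      using lspan_superset by blast
  qed
  show thesis
    by (rule that[OF \<theta>(1) \<theta>(2)[OF orbit] \<theta>(3,4)])
qed

lemma centralizer_subset_sandwich_commute:
  assumes "centralizer R M \<phi> \<subseteq> centralizer R M \<sigma>" and "\<theta> \<in> End R M" and "z \<in> carrier M"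
  shows "\<sigma> (sandwich \<theta> z) = sandwich \<theta> (\<sigma> z)"
proof -
  have "sandwich \<theta> \<in> centralizer R M \<sigma>"
    using assms(1) sandwich_centralizer[OF assms(2)] by blast
  then show ?thesis
    using assms(3) unfolding centralizer_iff by simp
qed

text \<open>\<open>\<sigma>\<close> commutes with the sandwich of a map \<open>\<theta>\<^sub>0\<close> sending \<open>\<phi>\<^bsup>n-1\<^esup> w\<close> to \<open>w\<close> and taking values in \<open>Rw\<close>;
  as that sandwich fixes \<open>w\<close>, evaluating at \<open>w\<close> expresses \<open>\<sigma> w\<close> through the \<open>\<phi>\<^sup>i w\<close>.\<close>

lemma centralizer_subset_value_at_cyclic:
  assumes \<sigma>: "\<sigma> \<in> End R M" and C: "centralizer R M \<phi> \<subseteq> centralizer R M \<sigma>"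
    and w: "w \<in> carrier M" and top: "(\<phi> ^^ (n - 1)) w \<noteq> \<zero>\<^bsub>M\<^esub>"
  obtains b where "\<And>i. b i \<in> carrier R" "\<sigma> w = (\<Oplus>\<^bsub>M\<^esub>i\<in>{..n - 1}. b i \<odot>\<^bsub>M\<^esub> (\<phi> ^^ i) w)"
proof -
  obtain \<theta>\<^sub>0 where \<theta>\<^sub>0: "\<theta>\<^sub>0 \<in> End R M" "\<And>k. k < n - 1 \<Longrightarrow> \<theta>\<^sub>0 ((\<phi> ^^ k) w) = \<zero>\<^bsub>M\<^esub>"
    "\<theta>\<^sub>0 ((\<phi> ^^ (n - 1)) w) = w" "\<And>z. z \<in> carrier M \<Longrightarrow> \<exists>r\<in>carrier R. \<theta>\<^sub>0 z = r \<odot>\<^bsub>M\<^esub> w"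
    using End_vanishing_on_lower_orbit[OF w top w] by blast
  define b where "b i = (SOME r. r \<in> carrier R \<and> \<theta>\<^sub>0 ((\<phi> ^^ (n - 1 - i)) (\<sigma> w)) = r \<odot>\<^bsub>M\<^esub> w)" for i
  have b: "b i \<in> carrier R \<and> \<theta>\<^sub>0 ((\<phi> ^^ (n - 1 - i)) (\<sigma> w)) = b i \<odot>\<^bsub>M\<^esub> w" for i
    unfolding b_def using \<theta>\<^sub>0(4)[OF funpow_closed[OF EndD(1)[OF \<sigma> w]]] by (rule someI2_bex) blast
  have "\<sigma> w = \<sigma> (sandwich \<theta>\<^sub>0 w)"
    using sandwich_eq_top[OF \<theta>\<^sub>0(1) w \<theta>\<^sub>0(2)] \<theta>\<^sub>0(3) by simp
  also have "\<dots> = sandwich \<theta>\<^sub>0 (\<sigma> w)"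
    by (rule centralizer_subset_sandwich_commute[OF C \<theta>\<^sub>0(1) w])
  also have "\<dots> = (\<Oplus>\<^bsub>M\<^esub>i\<in>{..n - 1}. b i \<odot>\<^bsub>M\<^esub> (\<phi> ^^ i) w)"
    unfolding sandwich_def
    using b EndD(3)[OF funpow_End] funpow_closed[OF w] w by (intro M.finsum_cong') auto
  finally show thesis
    using that b by blast
qed

text \<open>Every \<open>x\<close> is the image of \<open>w\<close> under a sandwich, which commutes with both \<open>\<phi>\<close> and \<open>\<sigma>\<close>, so the
  expression for \<open>\<sigma> w\<close> transports to \<open>\<sigma> x\<close>.\<close>

lemma centralizer_subset_imp_polynomial:
  assumes \<sigma>: "\<sigma> \<in> End R M" and C: "centralizer R M \<phi> \<subseteq> centralizer R M \<sigma>"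
  obtains a where "\<forall>i\<in>{1..n}. a i \<in> carrier R"
    "\<And>x. x \<in> carrier M \<Longrightarrow> (\<Oplus>\<^bsub>M\<^esub>i\<in>{1..n}. a i \<odot>\<^bsub>M\<^esub> (\<phi> ^^ (i - 1)) x) = \<sigma> x"
proof -
  obtain w where w: "w \<in> carrier M" and top: "(\<phi> ^^ (n - 1)) w \<noteq> \<zero>\<^bsub>M\<^esub>"
    using nilpotent unfolding nilpotent_index_def by blast
  obtain b where b: "\<And>i. b i \<in> carrier R" and \<sigma>_w: "\<sigma> w = (\<Oplus>\<^bsub>M\<^esub>i\<in>{..n - 1}. b i \<odot>\<^bsub>M\<^esub> (\<phi> ^^ i) w)"
    using centralizer_subset_value_at_cyclic[OF \<sigma> C w top] by blast
  have poly: "\<sigma> x = (\<Oplus>\<^bsub>M\<^esub>i\<in>{..n - 1}. b i \<odot>\<^bsub>M\<^esub> (\<phi> ^^ i) x)" if x: "x \<in> carrier M" for x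
  proof -
    obtain \<theta> where \<theta>: "\<theta> \<in> End R M" "\<And>k. k < n - 1 \<Longrightarrow> \<theta> ((\<phi> ^^ k) w) = \<zero>\<^bsub>M\<^esub>"
      "\<theta> ((\<phi> ^^ (n - 1)) w) = x"
      using End_vanishing_on_lower_orbit[OF w top x] by blast
    have x_eq: "sandwich \<theta> w = x"
      using sandwich_eq_top[OF \<theta>(1) w \<theta>(2)] \<theta>(3) by simp
    have "\<sigma> x = sandwich \<theta> (\<sigma> w)"
      using centralizer_subset_sandwich_commute[OF C \<theta>(1) w] x_eq by simp
    also have "\<dots> = (\<Oplus>\<^bsub>M\<^esub>i\<in>{..n - 1}. b i \<odot>\<^bsub>M\<^esub> (\<phi> ^^ i) (sandwich \<theta> w))"
      unfolding \<sigma>_w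
      by (rule End_finsum_funpow_commute[OF sandwich_End[OF \<theta>(1)] End_\<phi> sandwich_commute[OF \<theta>(1)]
            finite_atMost _ w]) (simp_all add: b)
    finally show ?thesis
      unfolding x_eq .
  qed
  show thesis
  proof (rule that)
    show "\<forall>i\<in>{1..n}. b (i - 1) \<in> carrier R"
      using b by blast
    show "(\<Oplus>\<^bsub>M\<^esub>i\<in>{1..n}. b (i - 1) \<odot>\<^bsub>M\<^esub> (\<phi> ^^ (i - 1)) x) = \<sigma> x" if "x \<in> carrier M" for x
      using poly[OF that] finsum_shift_index[OF index_pos, of "\<lambda>i. b i \<odot>\<^bsub>M\<^esub> (\<phi> ^^ i) x"]
        b funpow_closed[OF that] by auto
  qed
qed

end

theorem theorem4p10:
  fixes R :: "('a, 'c) ring_scheme"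
    and M :: "('a, 'b, 'd) module_scheme"
    and \<phi> \<sigma> :: "'b \<Rightarrow> 'b" and n d :: nat
  assumes "local_ring R"
    and "left_module R M"
    and "finitely_generated R M"
    and "semisimple R M"
    and "d = comp_length R M"
    and "\<phi> \<in> End R M"
    and "nilpotent_index M \<phi> n"
    and "\<sigma> \<in> End R M"
  shows "centralizer R M \<phi> \<subseteq> centralizer R M \<sigma> \<longleftrightarrow>
    (\<exists>y :: nat \<Rightarrow> 'b. \<exists>a :: nat \<Rightarrow> 'a.
       generates R M (y ` {1..d}) \<and> (\<forall>i\<in>{1..n}. a i \<in> carrier R) \<and>
       (\<forall>j\<in>{1..d}. \<forall>\<psi>\<in>centralizer R M \<phi>.
          (\<Oplus>\<^bsub>M\<^esub>i\<in>{1..n}. a i \<odot>\<^bsub>M\<^esub> (\<phi> ^^ (i - 1)) (\<psi> (y j))) = \<sigma> (\<psi> (y j))))"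
proof -
  interpret nilpotent_endomorphism R M \<phi> n
    by unfold_locales (fact assms)+
  show ?thesis
  proof
    assume "centralizer R M \<phi> \<subseteq> centralizer R M \<sigma>"
    then obtain a where a: "\<forall>i\<in>{1..n}. a i \<in> carrier R"
      and poly: "\<And>x. x \<in> carrier M \<Longrightarrow> (\<Oplus>\<^bsub>M\<^esub>i\<in>{1..n}. a i \<odot>\<^bsub>M\<^esub> (\<phi> ^^ (i - 1)) x) = \<sigma> x"
      using centralizer_subset_imp_polynomial[OF assms(8)] by blast
    obtain y where y: "generates R M (y ` {1..d})"
      using generating_family_comp_length[OF assms(3)] unfolding assms(5) .
    have "\<psi> (y j) \<in> carrier M" if "j \<in> {1..d}" "\<psi> \<in> centralizer R M \<phi>" for j \<psi>
      using that y EndD(1) unfolding generates_def centralizer_iff by blast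
    with y a poly show "\<exists>y a. generates R M (y ` {1..d}) \<and> (\<forall>i\<in>{1..n}. a i \<in> carrier R) \<and>
       (\<forall>j\<in>{1..d}. \<forall>\<psi>\<in>centralizer R M \<phi>.
          (\<Oplus>\<^bsub>M\<^esub>i\<in>{1..n}. a i \<odot>\<^bsub>M\<^esub> (\<phi> ^^ (i - 1)) (\<psi> (y j))) = \<sigma> (\<psi> (y j)))"
      by blast
  next
    assume "\<exists>y a. generates R M (y ` {1..d}) \<and> (\<forall>i\<in>{1..n}. a i \<in> carrier R) \<and>
       (\<forall>j\<in>{1..d}. \<forall>\<psi>\<in>centralizer R M \<phi>.
          (\<Oplus>\<^bsub>M\<^esub>i\<in>{1..n}. a i \<odot>\<^bsub>M\<^esub> (\<phi> ^^ (i - 1)) (\<psi> (y j))) = \<sigma> (\<psi> (y j)))"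
    then obtain y a where y: "generates R M (y ` {1..d})" and a: "\<forall>i\<in>{1..n}. a i \<in> carrier R"
      and poly: "\<forall>j\<in>{1..d}. \<forall>\<psi>\<in>centralizer R M \<phi>.
          (\<Oplus>\<^bsub>M\<^esub>i\<in>{1..n}. a i \<odot>\<^bsub>M\<^esub> (\<phi> ^^ (i - 1)) (\<psi> (y j))) = \<sigma> (\<psi> (y j))"
      by blast
    show "centralizer R M \<phi> \<subseteq> centralizer R M \<sigma>"
      using polynomial_on_generators_imp_centralizer_subset[of \<phi> \<sigma> "y ` {1..d}" "{1..n}" a "\<lambda>i. i - 1"]
        assms(6,8) y a poly by auto
  qed
qed

end
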